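(* Let $\Theta \subseteq \mathbb{R}^d$, let $U:\mathbb{R}^d \to \mathbb{R}$ be a differentiable energy function, and fix a step size $\epsilon>0$, a momentum scale $\sigma>0$, a friction parameter $\beta>0$ and an integer $T \ge 1$. Let $\pi(\theta) \propto \exp(-U(\theta))$ on $\Theta$, and let $\pi(\theta, r) \propto \exp\!\big(-U(\theta) - \tfrac{1}{2\sigma^2}\|r\|^2\big)$ on $\Theta \times \mathbb{R}^d$. Consider the Markov chain (AMAGOLD) whose state is $(\theta, r) \in \Theta\times\mathbb{R}^d$ and one transition of which is: 1. (Optionally) resample the momentum $r \sim \mathcal{N}(0, \sigma^2 I)$. 2. Set $r_{-1/2} = r$, $\rho_{-1/2} = 0$, and $\theta_0 = \theta + \tfrac12 \epsilon \sigma^{-2} r_{-1/2}$. 3. For $t = 0, 1, \ldots, T-1$: if $t \neq 0$, set $\theta_t = \theta_{t-1} + \epsilon \sigma^{-2} r_{t-1/2}$; sample $\eta_t \sim \mathcal{N}(0, 4\epsilon\beta\sigma^2 I)$; sample a random energy component $\tilde U_t$; set $r_{t+1/2} = \big((1-\epsilon\beta) r_{t-1/2} - \epsilon \nabla \tilde U_t(\theta_t) + \eta_t\big)/(1+\epsilon\beta)$ and $\rho_{t+1/2} = \rho_{t-1/2} + \tfrac12 \epsilon\sigma^{-2} \nabla \tilde U_t(\theta_t)^{\top}(r_{t-1/2} + r_{t+1/2})$. 4. Set $\theta_T = \theta_{T-1} + \tfrac12 \epsilon\sigma^{-2} r_{T-1/2}$, $\theta^* = \theta_T$, $r^* = r_{T-1/2}$,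 and $a = \exp\big(U(\theta) - U(\theta^* ) + \rho_{T-1/2}\big)$. 5. With probability $\min(1,a)$ (and provided $\theta^* \in \Theta$) move to $(\theta, r) \leftarrow (\theta^*, r^* )$; otherwise set $r \leftarrow -r_{-1/2}$ (keeping $\theta$). If the momentum is resampled in step 1 at every transition, then this Markov chain (viewed as a chain on $\theta$) is reversible with stationary distribution $\pi(\theta)$. If the momentum is not resampled, the Markov chain on $(\theta, r)$ is skew-reversible with respect to the involution $(\theta,r)^\perp = (\theta,-r)$, and its stationary distribution is $\pi(\theta, r)$ (whose $\theta$-marginal is $\pi(\theta)$).
   Context: The random energy components $\tilde U_0, \ldots, \tilde U_{T-1}$ are random differentiable functions (e.g. minibatch estimates $\tilde U(\theta) = -\frac{|\mathcal D|}{|\tilde{\mathcal D}|}\sum_{x\in\tilde{\mathcal D}} \log p(x\mid\theta) - \log p(\theta)$ of $U(\theta) = -\sum_{x\in\mathcal D}\log p(x\mid\theta) - \log p(\theta)$) drawn i.i.d. from a fixed distribution, independently of the state and of the Gaussian noise. A Markov chain with transition kernel $G$ is reversible with respect to $\pi$ if $\pi(x)G(x,y) = \pi(y)G(y,x)$ for all states $x,y$. Given a measure-preserving involution $x \mapsto x^\perp$ of the state space, $G$ is skew-reversible if $\pi(x) = \pi(x^\perp)$ and $\pi(x) G(x,y) = \pi(y^\perp) G(y^\perp, x^\perp)$ for all $x, y$. *)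

theory Defs
  imports "HOL-Probability.Probability"
begin

definition gauss_vec :: "real \<Rightarrow> (real^'d) measure" where
  "gauss_vec s = density lborel (\<lambda>x. ennreal (\<Prod>i\<in>UNIV. normal_density 0 s (x $ i)))"

definition mom_upd :: "real \<Rightarrow> real \<Rightarrow> (real^'d) \<Rightarrow> (real^'d) \<Rightarrow> (real^'d) \<Rightarrow> (real^'d)" where
  "mom_upd eps beta g eta rm =
     (1 / (1 + eps * beta)) *\<^sub>R ((1 - eps * beta) *\<^sub>R rm - eps *\<^sub>R g + eta)"

definition rho_upd :: "real \<Rightarrow> real \<Rightarrow> (real^'d) \<Rightarrow> (real^'d) \<Rightarrow> (real^'d) \<Rightarrow> real \<Rightarrow> real" where
  "rho_upd eps sig g rm rp rhom = rhom + (eps / (2 * sig\<^sup>2)) * (g \<bullet> (rm + rp))"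

text \<open>amag_pre ... t = (theta_t, r_{t-1/2}, rho_{t-1/2}) for the inner loop
  (eta t = eta_t, u t = index of the random energy component U~_t,
   gU u = gradient of U~ indexed by u).\<close>
fun amag_pre :: "real \<Rightarrow> real \<Rightarrow> real \<Rightarrow> ('u \<Rightarrow> (real^'d) \<Rightarrow> (real^'d)) \<Rightarrow> (real^'d) \<Rightarrow> (real^'d)
    \<Rightarrow> (nat \<Rightarrow> (real^'d)) \<Rightarrow> (nat \<Rightarrow> 'u) \<Rightarrow> nat \<Rightarrow> (real^'d) \<times> (real^'d) \<times> real" where
  "amag_pre eps sig beta gU th r eta u 0 = (th + (eps / (2 * sig\<^sup>2)) *\<^sub>R r, r, 0)"
| "amag_pre eps sig beta gU th r eta u (Suc t) =
     (case amag_pre eps sig beta gU th r eta u t of (tht, rm, rhom) \<Rightarrow>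
        let g = gU (u t) tht; rp = mom_upd eps beta g (eta t) rm
        in (tht + (eps / sig\<^sup>2) *\<^sub>R rp, rp, rho_upd eps sig g rm rp rhom))"

text \<open>Proposal (theta*, r*, rho_{T-1/2}) after the last inner step t = T-1 and the
  final half position step theta_T = theta_{T-1} + eps/(2 sig^2) r_{T-1/2}.\<close>
definition amag_prop :: "real \<Rightarrow> real \<Rightarrow> real \<Rightarrow> ('u \<Rightarrow> (real^'d) \<Rightarrow> (real^'d)) \<Rightarrow> (real^'d) \<Rightarrow> (real^'d)
    \<Rightarrow> (nat \<Rightarrow> (real^'d)) \<Rightarrow> (nat \<Rightarrow> 'u) \<Rightarrow> nat \<Rightarrow> (real^'d) \<times> (real^'d) \<times> real" where
  "amag_prop eps sig beta gU th r eta u T =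
     (case amag_pre eps sig beta gU th r eta u (T - 1) of (tht, rm, rhom) \<Rightarrow>
        let g = gU (u (T - 1)) tht; rp = mom_upd eps beta g (eta (T - 1)) rm
        in (tht + (eps / (2 * sig\<^sup>2)) *\<^sub>R rp, rp, rho_upd eps sig g rm rp rhom))"

text \<open>One AMAGOLD transition (steps 2-5) from state (th, r), given the noise
  w t = (eta_t, u_t) and a uniform variable v in [0,1] used for the accept test.\<close>
definition amag_step :: "(real^'d) set \<Rightarrow> ((real^'d) \<Rightarrow> real) \<Rightarrow> real \<Rightarrow> real \<Rightarrow> real
    \<Rightarrow> ('u \<Rightarrow> (real^'d) \<Rightarrow> (real^'d)) \<Rightarrow> nat \<Rightarrow> (real^'d) \<times> (real^'d)
    \<Rightarrow> (nat \<Rightarrow> (real^'d) \<times> 'u) \<times> real \<Rightarrow> (real^'d) \<times> (real^'d)" where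
  "amag_step Theta U eps sig beta gU T x \<omega> =
     (case x of (th, r) \<Rightarrow> case \<omega> of (w, v) \<Rightarrow>
      case amag_prop eps sig beta gU th r (\<lambda>t. fst (w t)) (\<lambda>t. snd (w t)) T of
        (ths, rs, rhos) \<Rightarrow>
          if ths \<in> Theta \<and> v < min 1 (exp (U th - U ths + rhos)) then (ths, rs) else (th, - r))"

definition amag_noise :: "real \<Rightarrow> real \<Rightarrow> real \<Rightarrow> 'u measure \<Rightarrow> nat
    \<Rightarrow> ((nat \<Rightarrow> (real^'d) \<times> 'u) \<times> real) measure" where
  "amag_noise eps sig beta Q T =
     (PiM {..<T} (\<lambda>_. (gauss_vec (sqrt (4 * eps * beta * sig\<^sup>2)) :: (real^'d) measure) \<Otimes>\<^sub>M Q))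
       \<Otimes>\<^sub>M uniform_measure lborel {0..1::real}"

definition amag_kernel :: "(real^'d) set \<Rightarrow> ((real^'d) \<Rightarrow> real) \<Rightarrow> real \<Rightarrow> real \<Rightarrow> real
    \<Rightarrow> ('u \<Rightarrow> (real^'d) \<Rightarrow> (real^'d)) \<Rightarrow> 'u measure \<Rightarrow> nat
    \<Rightarrow> (real^'d) \<times> (real^'d) \<Rightarrow> ((real^'d) \<times> (real^'d)) measure" where
  "amag_kernel Theta U eps sig beta gU Q T x =
     distr (amag_noise eps sig beta Q T) borel (amag_step Theta U eps sig beta gU T x)"

definition amag_kernel_resample :: "(real^'d) set \<Rightarrow> ((real^'d) \<Rightarrow> real) \<Rightarrow> real \<Rightarrow> real \<Rightarrow> real
    \<Rightarrow> ('u \<Rightarrow> (real^'d) \<Rightarrow> (real^'d)) \<Rightarrow> 'u measure \<Rightarrow> nat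
    \<Rightarrow> (real^'d) \<Rightarrow> (real^'d) measure" where
  "amag_kernel_resample Theta U eps sig beta gU Q T th =
     distr (gauss_vec sig \<Otimes>\<^sub>M amag_noise eps sig beta Q T) borel
       (\<lambda>(r, \<omega>). fst (amag_step Theta U eps sig beta gU T (th, r) \<omega>))"

definition pi_theta :: "(real^'d) set \<Rightarrow> ((real^'d) \<Rightarrow> real) \<Rightarrow> (real^'d) \<Rightarrow> real" where
  "pi_theta Theta U th =
     indicator Theta th * exp (- U th) / (\<integral>t. indicator Theta t * exp (- U t) \<partial>lborel)"

definition pi_state :: "(real^'d) set \<Rightarrow> ((real^'d) \<Rightarrow> real) \<Rightarrow> real \<Rightarrow> (real^'d) \<times> (real^'d) \<Rightarrow> real" where
  "pi_state Theta U sig x =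
     indicator Theta (fst x) * exp (- U (fst x) - (norm (snd x))\<^sup>2 / (2 * sig\<^sup>2)) /
     (\<integral>(y::(real^'d) \<times> (real^'d)). indicator Theta (fst y) * exp (- U (fst y) - (norm (snd y))\<^sup>2 / (2 * sig\<^sup>2)) \<partial>lborel)"

definition flip :: "(real^'d) \<times> (real^'d) \<Rightarrow> (real^'d) \<times> (real^'d)" where
  "flip x = (fst x, - snd x)"

end

theory Submission
  imports Defs
begin

(* A leap (half a position step, the friction-and-noise momentum update at the
   midpoint q, half a position step) takes (q - h p, p) to (q + h p', p'), and for fixed q the
   noise needed is an affine function of p'. The noise needed for the reverse leap from
   (q + h p', -p') to (q - h p, -p) has Gaussian density larger by exactly exp W, where
   W = K p' - K p + eps/(2 sig^2) g.(p + p') is the work of the leap. Hence, started from Lebesgue measure, a leap and its flipped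
   reversal have the same joint law of (start, end, work) up to the weight exp W. This skew
   balance survives mixing over the energy component and composition with time-reversed noise,
   so it holds for the whole trajectory, whose total work differs from rho by the kinetic energy
   gained. The acceptance probability min 1 (exp (H x - H y + W)) turns it into skew detailed
   balance for the density exp (- H); rejections only flip the momentum. Stationarity follows by
   taking A = UNIV, as flip preserves Lebesgue measure and exp (- H), and integrating out a
   resampled momentum gives reversibility of the chain on theta. *)

section \<open>Gaussian densities and invariances of Lebesgue measure\<close>

definition gauss_dens :: "real \<Rightarrow> real^'d \<Rightarrow> real" where
  "gauss_dens s x = (\<Prod>i\<in>UNIV. normal_density 0 s (x $ i))"

lemma gauss_dens_nonneg: "0 \<le> gauss_dens s x"
  unfolding gauss_dens_def by (auto intro: prod_nonneg)

lemma borel_measurable_gauss_dens[measurable]: "gauss_dens s \<in> borel_measurable borel"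
  unfolding gauss_dens_def by measurable

lemma gauss_vec_eq_density: "gauss_vec s = density lborel (\<lambda>x. ennreal (gauss_dens s x))"
  unfolding gauss_vec_def gauss_dens_def ..

lemma sets_gauss_vec[measurable_cong]: "sets (gauss_vec s) = sets borel"
  by (simp add: gauss_vec_def)

lemma gauss_dens_eq:
  fixes x :: "real^'d"
  shows "gauss_dens s x = (1 / sqrt (2 * pi * s\<^sup>2)) ^ CARD('d) * exp (- (norm x)\<^sup>2 / (2 * s\<^sup>2))"
proof -
  have "gauss_dens s x = (1 / sqrt (2 * pi * s\<^sup>2)) ^ CARD('d) * (\<Prod>i\<in>UNIV. exp (- (x $ i)\<^sup>2 / (2 * s\<^sup>2)))"
    unfolding gauss_dens_def normal_density_def
    by (simp only: diff_zero times_divide_eq_left[symmetric] mult_1 prod.distrib prod_constant card_UNIV)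
  also have "(\<Prod>i\<in>UNIV. exp (- (x $ i)\<^sup>2 / (2 * s\<^sup>2))) = exp (\<Sum>i\<in>UNIV. - (x $ i)\<^sup>2 / (2 * s\<^sup>2))"
    by (simp add: exp_sum)
  also have "(\<Sum>i\<in>UNIV. - (x $ i)\<^sup>2 / (2 * s\<^sup>2)) = - (norm x)\<^sup>2 / (2 * s\<^sup>2)"
  proof -
    have "(norm x)\<^sup>2 = (\<Sum>i\<in>UNIV. (x $ i)\<^sup>2)"
      by (simp only: power2_norm_eq_inner) (simp add: inner_vec_def power2_eq_square)
    then show ?thesis by (simp add: sum_divide_distrib[symmetric] sum_negf)
  qed
  finally show ?thesis .
qed

lemma prod_Basis_vec: "(\<Prod>b\<in>(Basis :: (real^'d) set). f (x \<bullet> b)) = (\<Prod>i\<in>UNIV. f (x $ i))"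
  for x :: "real^'d"
proof -
  have B: "(Basis :: (real^'d) set) = (\<lambda>i. axis i 1) ` UNIV"
    by (auto simp: Basis_vec_def)
  have "inj (\<lambda>i::'d. axis i (1::real))"
    by (auto intro!: injI simp: axis_eq_axis)
  then show ?thesis unfolding B by (subst prod.reindex) (simp_all add: inner_axis)
qed

lemma nn_integral_gauss_dens:
  assumes "s > 0"
  shows "(\<integral>\<^sup>+x. ennreal (gauss_dens s x) \<partial>(lborel :: (real^'d) measure)) = 1"
proof -
  have "(\<integral>\<^sup>+x. ennreal (gauss_dens s x) \<partial>(lborel :: (real^'d) measure))
      = (\<integral>\<^sup>+x. (\<Prod>b\<in>(Basis :: (real^'d) set). ennreal (normal_density 0 s (x \<bullet> b))) \<partial>lborel)"
    by (simp add: gauss_dens_def prod_Basis_vec prod_ennreal normal_density_nonneg)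
  also have "\<dots> = (\<Prod>b\<in>(Basis :: (real^'d) set). (\<integral>\<^sup>+x. ennreal (normal_density 0 s x) \<partial>lborel))"
    by (rule nn_integral_lborel_prod) auto
  also have "(\<integral>\<^sup>+x. ennreal (normal_density 0 s x) \<partial>lborel) = 1"
    using assms by (subst nn_integral_eq_integral)
      (auto simp: normal_density_nonneg integrable_normal_density integral_normal_density)
  finally show ?thesis by simp
qed

lemma prob_space_gauss_vec: "s > 0 \<Longrightarrow> prob_space (gauss_vec s :: (real^'d) measure)"
  by (rule prob_spaceI) (simp add: gauss_vec_eq_density emeasure_density nn_integral_gauss_dens)

lemma measurable_fst_borel[measurable]:
  "(fst :: 'a::second_countable_topology \<times> 'b::second_countable_topology \<Rightarrow> 'a) \<in> borel_measurable borel"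
  by (simp add: borel_prod[symmetric])

lemma measurable_snd_borel[measurable]:
  "(snd :: 'a::second_countable_topology \<times> 'b::second_countable_topology \<Rightarrow> 'b) \<in> borel_measurable borel"
  by (simp add: borel_prod[symmetric])

lemma sets_Times_UNIV_borel[measurable]:
  "A \<in> sets borel \<Longrightarrow> A \<times> (UNIV :: 'b set) \<in> sets (borel :: ('a::second_countable_topology \<times> 'b::second_countable_topology) measure)"
  unfolding borel_prod[symmetric] by (rule pair_measureI) auto

lemma nn_integral_lborel_affine:
  fixes H :: "'a::euclidean_space \<Rightarrow> ennreal"
  assumes "a \<noteq> 0" and [measurable]: "H \<in> borel_measurable borel"
  shows "(\<integral>\<^sup>+x. H x \<partial>lborel) = ennreal (\<bar>a\<bar> ^ DIM('a)) * (\<integral>\<^sup>+x. H (t + a *\<^sub>R x) \<partial>lborel)"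
  by (subst lborel_affine[OF assms(1), of t])
    (simp add: nn_integral_density nn_integral_distr nn_integral_cmult)

lemma nn_integral_lborel_translate:
  fixes H :: "'a::euclidean_space \<Rightarrow> ennreal"
  assumes "H \<in> borel_measurable borel"
  shows "(\<integral>\<^sup>+x. H x \<partial>lborel) = (\<integral>\<^sup>+x. H (t + x) \<partial>lborel)"
  using nn_integral_lborel_affine[of 1 H t] assms by simp

lemma nn_integral_lborel_uminus:
  fixes H :: "'a::euclidean_space \<Rightarrow> ennreal"
  assumes "H \<in> borel_measurable borel"
  shows "(\<integral>\<^sup>+x. H x \<partial>lborel) = (\<integral>\<^sup>+x. H (- x) \<partial>lborel)"
  using nn_integral_lborel_affine[of "-1" H 0] assms by simp

lemma nn_integral_lborel_pair:
  fixes H :: "'a::euclidean_space \<times> 'b::euclidean_space \<Rightarrow> ennreal"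
  assumes "H \<in> borel_measurable borel"
  shows "(\<integral>\<^sup>+x. H x \<partial>lborel) = (\<integral>\<^sup>+q. \<integral>\<^sup>+p. H (q, p) \<partial>lborel \<partial>lborel)"
proof -
  have "H \<in> borel_measurable (lborel \<Otimes>\<^sub>M lborel)"
    using assms by (simp add: lborel_prod)
  then show ?thesis by (simp add: lborel.nn_integral_fst lborel_prod)
qed

lemma nn_integral_lborel_swap:
  fixes H :: "'a::euclidean_space \<Rightarrow> 'b::euclidean_space \<Rightarrow> ennreal"
  assumes "(\<lambda>(x, y). H x y) \<in> borel_measurable borel"
  shows "(\<integral>\<^sup>+x. \<integral>\<^sup>+y. H x y \<partial>lborel \<partial>lborel) = (\<integral>\<^sup>+y. \<integral>\<^sup>+x. H x y \<partial>lborel \<partial>lborel)"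
  using assms by (intro lborel_pair.Fubini'[symmetric]) (simp add: lborel_prod)

lemma nn_integral_lborel_reflect:
  fixes H :: "'a::euclidean_space \<Rightarrow> 'a \<Rightarrow> ennreal"
  assumes [measurable]: "(\<lambda>(x, y). H x y) \<in> borel_measurable borel"
  shows "(\<integral>\<^sup>+p. \<integral>\<^sup>+p'. H p p' \<partial>lborel \<partial>lborel) = (\<integral>\<^sup>+P. \<integral>\<^sup>+P'. H (- P') (- P) \<partial>lborel \<partial>lborel)"
proof -
  have [measurable]: "(\<lambda>(x, y). H x y) \<in> borel_measurable (borel \<Otimes>\<^sub>M borel)"
    by (simp add: borel_prod)
  have [measurable]: "(\<lambda>p'. \<integral>\<^sup>+p. H p p' \<partial>lborel) \<in> borel_measurable borel"
    using lborel.borel_measurable_nn_integral_fst[of "\<lambda>(p', p). H p p'" borel] by simp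
  have "(\<integral>\<^sup>+p. \<integral>\<^sup>+p'. H p p' \<partial>lborel \<partial>lborel) = (\<integral>\<^sup>+p'. \<integral>\<^sup>+p. H p p' \<partial>lborel \<partial>lborel)"
    by (rule nn_integral_lborel_swap) simp
  also have "\<dots> = (\<integral>\<^sup>+P. \<integral>\<^sup>+p. H p (- P) \<partial>lborel \<partial>lborel)"
    by (rule nn_integral_lborel_uminus) simp
  also have "\<dots> = (\<integral>\<^sup>+P. \<integral>\<^sup>+P'. H (- P') (- P) \<partial>lborel \<partial>lborel)"
    by (intro nn_integral_cong nn_integral_lborel_uminus) simp
  finally show ?thesis .
qed

lemma flip_flip[simp]: "flip (flip x) = x"
  by (simp add: flip_def)

lemma fst_flip[simp]: "fst (flip x) = fst x"
  and snd_flip[simp]: "snd (flip x) = - snd x"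
  by (simp_all add: flip_def)

lemma measurable_flip[measurable]: "flip \<in> borel \<rightarrow>\<^sub>M borel"
  unfolding flip_def by (simp add: borel_prod[symmetric])

lemma flip_image_eq_vimage: "flip ` A = flip -` A"
  by (auto simp: image_iff) (metis flip_flip)

lemma sets_flip_image[measurable]: "A \<in> sets borel \<Longrightarrow> flip ` A \<in> sets borel"
  unfolding flip_image_eq_vimage by (rule measurable_sets_borel[OF measurable_flip])

lemma indicator_flip_image: "indicator (flip ` A) x = indicator A (flip x)"
  by (simp add: flip_image_eq_vimage indicator_def)

lemma flip_image_Times_UNIV: "flip ` (A \<times> UNIV) = A \<times> UNIV"
  unfolding flip_image_eq_vimage by (auto simp: flip_def)

lemma flip_UNIV: "flip ` UNIV = UNIV"
  using flip_image_Times_UNIV[of UNIV] by simp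

lemma nn_integral_lborel_flip:
  fixes H :: "(real^'d) \<times> (real^'d) \<Rightarrow> ennreal"
  assumes [measurable]: "H \<in> borel_measurable borel"
  shows "(\<integral>\<^sup>+x. H x \<partial>lborel) = (\<integral>\<^sup>+x. H (flip x) \<partial>lborel)"
proof -
  have "(\<integral>\<^sup>+x. H x \<partial>lborel) = (\<integral>\<^sup>+q. \<integral>\<^sup>+p. H (q, p) \<partial>lborel \<partial>lborel)"
    by (rule nn_integral_lborel_pair) simp
  also have "\<dots> = (\<integral>\<^sup>+q. \<integral>\<^sup>+p. H (q, - p) \<partial>lborel \<partial>lborel)"
    by (intro nn_integral_cong nn_integral_lborel_uminus) simp
  also have "\<dots> = (\<integral>\<^sup>+x. H (flip x) \<partial>lborel)"
  proof -
    have "(\<lambda>x. H (flip x)) \<in> borel_measurable borel" by measurable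
    from nn_integral_lborel_pair[OF this] show ?thesis by (simp add: flip_def)
  qed
  finally show ?thesis .
qed

section \<open>Skew-balanced random maps\<close>

type_synonym 'd state = "(real^'d::finite) \<times> (real^'d)"

text \<open>A random map \<open>f\<close> driven by noise \<open>\<omega> \<sim> N\<close>, with log-weight \<open>v\<close>, is skew-balanced against
  \<open>g\<close> with log-weight \<open>u\<close> if, started from Lebesgue measure, the joint law of (start, end, weight)
  of \<open>f\<close> equals that of the flipped and time-reversed run of \<open>g\<close>, reweighted by \<open>exp u\<close>.\<close>
definition skew_balanced :: "'w measure \<Rightarrow> ('d::finite state \<Rightarrow> 'w \<Rightarrow> 'd state) \<Rightarrow> ('d state \<Rightarrow> 'w \<Rightarrow> real)
    \<Rightarrow> ('d state \<Rightarrow> 'w \<Rightarrow> 'd state) \<Rightarrow> ('d state \<Rightarrow> 'w \<Rightarrow> real) \<Rightarrow> bool" where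
  "skew_balanced N f v g u \<longleftrightarrow> (\<forall>F :: 'd state \<times> 'd state \<times> real \<Rightarrow> ennreal. F \<in> borel_measurable borel \<longrightarrow>
     (\<integral>\<^sup>+x. \<integral>\<^sup>+\<omega>. F (x, f x \<omega>, v x \<omega>) \<partial>N \<partial>lborel)
   = (\<integral>\<^sup>+z. \<integral>\<^sup>+\<omega>. F (flip (g z \<omega>), flip z, - u z \<omega>) * ennreal (exp (u z \<omega>)) \<partial>N \<partial>lborel))"

lemma skew_balancedD:
  "skew_balanced N f v g u \<Longrightarrow> F \<in> borel_measurable borel \<Longrightarrow>
     (\<integral>\<^sup>+x. \<integral>\<^sup>+\<omega>. F (x, f x \<omega>, v x \<omega>) \<partial>N \<partial>lborel)
   = (\<integral>\<^sup>+z. \<integral>\<^sup>+\<omega>. F (flip (g z \<omega>), flip z, - u z \<omega>) * ennreal (exp (u z \<omega>)) \<partial>N \<partial>lborel)"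
  unfolding skew_balanced_def by blast

lemma skew_balancedI:
  "(\<And>F. F \<in> borel_measurable borel \<Longrightarrow>
     (\<integral>\<^sup>+x. \<integral>\<^sup>+\<omega>. F (x, f x \<omega>, v x \<omega>) \<partial>N \<partial>lborel)
   = (\<integral>\<^sup>+z. \<integral>\<^sup>+\<omega>. F (flip (g z \<omega>), flip z, - u z \<omega>) * ennreal (exp (u z \<omega>)) \<partial>N \<partial>lborel))
   \<Longrightarrow> skew_balanced N f v g u"
  unfolding skew_balanced_def by blast

lemma skew_balanced_distr:
  fixes f :: "'d::finite state \<Rightarrow> 'w \<Rightarrow> 'd state"
  assumes bal: "skew_balanced N (\<lambda>x \<omega>. f x (\<phi> \<omega>)) (\<lambda>x \<omega>. v x (\<phi> \<omega>)) (\<lambda>x \<omega>. g x (\<phi> \<omega>)) (\<lambda>x \<omega>. u x (\<phi> \<omega>))"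
    and [measurable]: "\<phi> \<in> N \<rightarrow>\<^sub>M N'" and distr: "distr N N' \<phi> = N'"
    and [measurable]: "case_prod f \<in> borel \<Otimes>\<^sub>M N' \<rightarrow>\<^sub>M borel" "case_prod v \<in> borel \<Otimes>\<^sub>M N' \<rightarrow>\<^sub>M borel"
      "case_prod g \<in> borel \<Otimes>\<^sub>M N' \<rightarrow>\<^sub>M borel" "case_prod u \<in> borel \<Otimes>\<^sub>M N' \<rightarrow>\<^sub>M borel"
  shows "skew_balanced N' f v g u"
proof (rule skew_balancedI)
  fix F :: "'d state \<times> 'd state \<times> real \<Rightarrow> ennreal"
  assume [measurable]: "F \<in> borel_measurable borel"
  have pull: "(\<integral>\<^sup>+\<omega>. H \<omega> \<partial>N') = (\<integral>\<^sup>+\<omega>. H (\<phi> \<omega>) \<partial>N)" if "H \<in> borel_measurable N'" for H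
    using that by (subst distr[symmetric]) (simp add: nn_integral_distr)
  show "(\<integral>\<^sup>+x. \<integral>\<^sup>+\<omega>. F (x, f x \<omega>, v x \<omega>) \<partial>N' \<partial>lborel)
      = (\<integral>\<^sup>+z. \<integral>\<^sup>+\<omega>. F (flip (g z \<omega>), flip z, - u z \<omega>) * ennreal (exp (u z \<omega>)) \<partial>N' \<partial>lborel)"
    using skew_balancedD[OF bal, of F] by (simp add: pull)
qed

text \<open>The noise of the later map comes first, as when a product measure over \<open>{..<n}\<close> is
  extended by the coordinate \<open>n\<close>.\<close>
lemma skew_balanced_compose:
  fixes f1 :: "'d::finite state \<Rightarrow> 'w1 \<Rightarrow> 'd state" and f2 :: "'d state \<Rightarrow> 'w2 \<Rightarrow> 'd state"
  assumes bal1: "skew_balanced N1 f1 v1 g1 u1" and bal2: "skew_balanced N2 f2 v2 g2 u2"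
    and "prob_space N1" "prob_space N2"
    and [measurable]: "case_prod f1 \<in> borel \<Otimes>\<^sub>M N1 \<rightarrow>\<^sub>M borel" "case_prod v1 \<in> borel \<Otimes>\<^sub>M N1 \<rightarrow>\<^sub>M borel"
      "case_prod g1 \<in> borel \<Otimes>\<^sub>M N1 \<rightarrow>\<^sub>M borel" "case_prod u1 \<in> borel \<Otimes>\<^sub>M N1 \<rightarrow>\<^sub>M borel"
      "case_prod f2 \<in> borel \<Otimes>\<^sub>M N2 \<rightarrow>\<^sub>M borel" "case_prod v2 \<in> borel \<Otimes>\<^sub>M N2 \<rightarrow>\<^sub>M borel"
      "case_prod g2 \<in> borel \<Otimes>\<^sub>M N2 \<rightarrow>\<^sub>M borel" "case_prod u2 \<in> borel \<Otimes>\<^sub>M N2 \<rightarrow>\<^sub>M borel"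
  shows "skew_balanced (N2 \<Otimes>\<^sub>M N1)
    (\<lambda>x (\<omega>2, \<omega>1). f2 (f1 x \<omega>1) \<omega>2) (\<lambda>x (\<omega>2, \<omega>1). v1 x \<omega>1 + v2 (f1 x \<omega>1) \<omega>2)
    (\<lambda>z (\<omega>2, \<omega>1). g1 (g2 z \<omega>2) \<omega>1) (\<lambda>z (\<omega>2, \<omega>1). u2 z \<omega>2 + u1 (g2 z \<omega>2) \<omega>1)"
proof (rule skew_balancedI, goal_cases)
  case (1 F)
  interpret N1: prob_space N1 by fact
  interpret N2: prob_space N2 by fact
  interpret N21: pair_sigma_finite N2 N1 ..
  note [measurable] = 1
  define G where "G t = (\<integral>\<^sup>+\<omega>2. F (fst t, f2 (fst (snd t)) \<omega>2, snd (snd t) + v2 (fst (snd t)) \<omega>2) \<partial>N2)"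
    for t :: "'d state \<times> 'd state \<times> real"
  define H where "H t = (\<integral>\<^sup>+\<omega>1. F (flip (g1 (flip (fst t)) \<omega>1), fst (snd t), - u1 (flip (fst t)) \<omega>1 + snd (snd t))
      * ennreal (exp (u1 (flip (fst t)) \<omega>1)) \<partial>N1)" for t :: "'d state \<times> 'd state \<times> real"
  have [measurable]: "G \<in> borel_measurable borel" "H \<in> borel_measurable borel"
    unfolding G_def H_def by measurable
  show ?case (is "?L = ?R")
  proof -
    have "?L = (\<integral>\<^sup>+x. \<integral>\<^sup>+\<omega>1. G (x, f1 x \<omega>1, v1 x \<omega>1) \<partial>N1 \<partial>lborel)"
      by (intro nn_integral_cong) (simp add: G_def N21.nn_integral_snd[symmetric] split_beta')
    also have "\<dots> = (\<integral>\<^sup>+z. \<integral>\<^sup>+\<omega>1. G (flip (g1 z \<omega>1), flip z, - u1 z \<omega>1) * ennreal (exp (u1 z \<omega>1)) \<partial>N1 \<partial>lborel)"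
      by (rule skew_balancedD[OF bal1]) measurable
    also have "\<dots> = (\<integral>\<^sup>+y. \<integral>\<^sup>+\<omega>1. G (flip (g1 (flip y) \<omega>1), y, - u1 (flip y) \<omega>1) * ennreal (exp (u1 (flip y) \<omega>1))
        \<partial>N1 \<partial>lborel)"
      by (subst nn_integral_lborel_flip) simp_all
    also have "\<dots> = (\<integral>\<^sup>+y. \<integral>\<^sup>+\<omega>2. H (y, f2 y \<omega>2, v2 y \<omega>2) \<partial>N2 \<partial>lborel)"
      unfolding G_def H_def
      by (intro nn_integral_cong) (simp add: nn_integral_multc[symmetric] N21.Fubini'[symmetric])
    also have "\<dots> = (\<integral>\<^sup>+z. \<integral>\<^sup>+\<omega>2. H (flip (g2 z \<omega>2), flip z, - u2 z \<omega>2) * ennreal (exp (u2 z \<omega>2)) \<partial>N2 \<partial>lborel)"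
      by (rule skew_balancedD[OF bal2]) measurable
    also have "\<dots> = ?R"
    proof (intro nn_integral_cong)
      fix z
      have "H (flip (g2 z \<omega>2), flip z, - u2 z \<omega>2) * ennreal (exp (u2 z \<omega>2))
        = (\<integral>\<^sup>+\<omega>1. F (flip (g1 (g2 z \<omega>2) \<omega>1), flip z, - (u2 z \<omega>2 + u1 (g2 z \<omega>2) \<omega>1))
            * ennreal (exp (u2 z \<omega>2 + u1 (g2 z \<omega>2) \<omega>1)) \<partial>N1)" for \<omega>2
      proof -
        have swap: "- u1 (g2 z \<omega>2) \<omega>1 - u2 z \<omega>2 = - u2 z \<omega>2 - u1 (g2 z \<omega>2) \<omega>1" for \<omega>1
          by simp
        show ?thesis
          unfolding H_def by (subst nn_integral_multc[symmetric])
            (auto intro!: nn_integral_cong simp: exp_add ennreal_mult' mult_ac swap)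
      qed
      moreover have "(\<lambda>(\<omega>2, \<omega>1). F (flip (g1 (g2 z \<omega>2) \<omega>1), flip z, - (u2 z \<omega>2 + u1 (g2 z \<omega>2) \<omega>1))
          * ennreal (exp (u2 z \<omega>2 + u1 (g2 z \<omega>2) \<omega>1))) \<in> borel_measurable (N2 \<Otimes>\<^sub>M N1)"
        by measurable
      ultimately show "(\<integral>\<^sup>+\<omega>2. H (flip (g2 z \<omega>2), flip z, - u2 z \<omega>2) * ennreal (exp (u2 z \<omega>2)) \<partial>N2)
        = (\<integral>\<^sup>+\<omega>. F (flip (case \<omega> of (\<omega>2, \<omega>1) \<Rightarrow> g1 (g2 z \<omega>2) \<omega>1), flip z,
            - (case \<omega> of (\<omega>2, \<omega>1) \<Rightarrow> u2 z \<omega>2 + u1 (g2 z \<omega>2) \<omega>1))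
          * ennreal (exp (case \<omega> of (\<omega>2, \<omega>1) \<Rightarrow> u2 z \<omega>2 + u1 (g2 z \<omega>2) \<omega>1)) \<partial>(N2 \<Otimes>\<^sub>M N1))"
        by (simp add: N1.nn_integral_fst[symmetric] split_beta')
    qed
    finally show ?thesis .
  qed
qed

lemma skew_balanced_mixture:
  fixes f :: "'d::finite state \<Rightarrow> 'e \<times> 'u \<Rightarrow> 'd state"
  assumes bal: "\<And>u. u \<in> space Q \<Longrightarrow> skew_balanced M (\<lambda>x e. f x (e, u)) (\<lambda>x e. v x (e, u)) (\<lambda>x e. g x (e, u)) (\<lambda>x e. w x (e, u))"
    and "prob_space M" "prob_space Q"
    and [measurable]: "case_prod f \<in> borel \<Otimes>\<^sub>M (M \<Otimes>\<^sub>M Q) \<rightarrow>\<^sub>M borel"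
      "case_prod v \<in> borel \<Otimes>\<^sub>M (M \<Otimes>\<^sub>M Q) \<rightarrow>\<^sub>M borel"
      "case_prod g \<in> borel \<Otimes>\<^sub>M (M \<Otimes>\<^sub>M Q) \<rightarrow>\<^sub>M borel"
      "case_prod w \<in> borel \<Otimes>\<^sub>M (M \<Otimes>\<^sub>M Q) \<rightarrow>\<^sub>M borel"
  shows "skew_balanced (M \<Otimes>\<^sub>M Q) f v g w"
proof (rule skew_balancedI, goal_cases)
  case (1 F)
  interpret M: prob_space M by fact
  interpret Q: prob_space Q by fact
  interpret MQ: pair_sigma_finite M Q ..
  interpret LQ: pair_sigma_finite "lborel :: 'd state measure" Q ..
  note [measurable] = 1
  have split: "(\<integral>\<^sup>+\<omega>. H \<omega> \<partial>(M \<Otimes>\<^sub>M Q)) = (\<integral>\<^sup>+u. \<integral>\<^sup>+e. H (e, u) \<partial>M \<partial>Q)"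
    if "H \<in> borel_measurable (M \<Otimes>\<^sub>M Q)" for H
    using MQ.nn_integral_snd[OF that] by simp
  show ?case (is "?L = ?R")
  proof -
    have "?L = (\<integral>\<^sup>+x. \<integral>\<^sup>+u. \<integral>\<^sup>+e. F (x, f x (e, u), v x (e, u)) \<partial>M \<partial>Q \<partial>lborel)"
      by (intro nn_integral_cong split) measurable
    also have "\<dots> = (\<integral>\<^sup>+u. \<integral>\<^sup>+x. \<integral>\<^sup>+e. F (x, f x (e, u), v x (e, u)) \<partial>M \<partial>lborel \<partial>Q)"
      by (rule LQ.Fubini'[symmetric]) measurable
    also have "\<dots> = (\<integral>\<^sup>+u. \<integral>\<^sup>+z. \<integral>\<^sup>+e. F (flip (g z (e, u)), flip z, - w z (e, u)) * ennreal (exp (w z (e, u)))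
        \<partial>M \<partial>lborel \<partial>Q)"
      by (intro nn_integral_cong skew_balancedD[OF bal]) simp_all
    also have "\<dots> = (\<integral>\<^sup>+z. \<integral>\<^sup>+u. \<integral>\<^sup>+e. F (flip (g z (e, u)), flip z, - w z (e, u)) * ennreal (exp (w z (e, u)))
        \<partial>M \<partial>Q \<partial>lborel)"
      by (rule LQ.Fubini') measurable
    also have "\<dots> = ?R"
      by (intro nn_integral_cong split[symmetric]) measurable
    finally show ?thesis .
  qed
qed

fun iterate :: "('a \<Rightarrow> 'w \<Rightarrow> 'a) \<Rightarrow> nat \<Rightarrow> 'a \<Rightarrow> (nat \<Rightarrow> 'w) \<Rightarrow> 'a" where
  "iterate f 0 x w = x"
| "iterate f (Suc n) x w = f (iterate f n x w) (w n)"

fun iterate_work :: "('a \<Rightarrow> 'w \<Rightarrow> 'a) \<Rightarrow> ('a \<Rightarrow> 'w \<Rightarrow> real) \<Rightarrow> nat \<Rightarrow> 'a \<Rightarrow> (nat \<Rightarrow> 'w) \<Rightarrow> real" where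
  "iterate_work f v 0 x w = 0"
| "iterate_work f v (Suc n) x w = iterate_work f v n x w + v (iterate f n x w) (w n)"

definition reverse_noise :: "nat \<Rightarrow> (nat \<Rightarrow> 'w) \<Rightarrow> nat \<Rightarrow> 'w" where
  "reverse_noise n w = (\<lambda>i\<in>{..<n}. w (n - 1 - i))"

lemma iterate_cong: "(\<And>i. i < n \<Longrightarrow> w i = w' i) \<Longrightarrow> iterate f n x w = iterate f n x w'"
  by (induction n) auto

lemma iterate_work_cong: "(\<And>i. i < n \<Longrightarrow> w i = w' i) \<Longrightarrow> iterate_work f v n x w = iterate_work f v n x w'"
proof (induction n)
  case (Suc n)
  have "iterate f n x w = iterate f n x w'"
    by (rule iterate_cong) (simp add: Suc.prems)
  with Suc show ?case by simp
qed simp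

lemma iterate_fun_upd: "n \<le> m \<Longrightarrow> iterate f n x (w(m := \<eta>)) = iterate f n x w"
  by (rule iterate_cong) simp

lemma iterate_work_fun_upd: "n \<le> m \<Longrightarrow> iterate_work f v n x (w(m := \<eta>)) = iterate_work f v n x w"
  by (rule iterate_work_cong) simp

lemma iterate_Suc_first: "iterate f (Suc n) x w = iterate f n (f x (w 0)) (\<lambda>i. w (Suc i))"
  by (induction n) auto

lemma iterate_work_Suc_first:
  "iterate_work f v (Suc n) x w = v x (w 0) + iterate_work f v n (f x (w 0)) (\<lambda>i. w (Suc i))"
  by (induction n) (auto simp: iterate_Suc_first simp del: iterate.simps(2))

lemma iterate_reverse_noise_Suc:
  "iterate f (Suc n) z (reverse_noise (Suc n) (w(n := \<eta>))) = iterate f n (f z \<eta>) (reverse_noise n w)"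
  unfolding iterate_Suc_first by (auto simp: reverse_noise_def intro!: iterate_cong)

lemma iterate_work_reverse_noise_Suc:
  "iterate_work f v (Suc n) z (reverse_noise (Suc n) (w(n := \<eta>)))
     = v z \<eta> + iterate_work f v n (f z \<eta>) (reverse_noise n w)"
  unfolding iterate_work_Suc_first by (auto simp: reverse_noise_def intro!: iterate_work_cong)

lemma measurable_iterate:
  assumes f: "case_prod f \<in> X \<Otimes>\<^sub>M N \<rightarrow>\<^sub>M X" and "x \<in> M \<rightarrow>\<^sub>M X"
    and "\<And>i. i < n \<Longrightarrow> (\<lambda>t. w t i) \<in> M \<rightarrow>\<^sub>M N"
  shows "(\<lambda>t. iterate f n (x t) (w t)) \<in> M \<rightarrow>\<^sub>M X"
  using assms(2,3) by (induction n) (auto intro: measurable_Pair_compose_split[OF f])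

lemma measurable_iterate_work:
  assumes "case_prod f \<in> X \<Otimes>\<^sub>M N \<rightarrow>\<^sub>M X" and v: "case_prod v \<in> X \<Otimes>\<^sub>M N \<rightarrow>\<^sub>M borel"
    and "x \<in> M \<rightarrow>\<^sub>M X" and "\<And>i. i < n \<Longrightarrow> (\<lambda>t. w t i) \<in> M \<rightarrow>\<^sub>M N"
  shows "(\<lambda>t. iterate_work f v n (x t) (w t)) \<in> borel_measurable M"
  using assms(3,4)
proof (induction n)
  case (Suc n)
  have "(\<lambda>t. v (iterate f n (x t) (w t)) (w t n)) \<in> borel_measurable M"
    using Suc.prems by (intro measurable_Pair_compose_split[OF v] measurable_iterate[OF assms(1)]) auto
  with Suc show ?case by simp
qed simp

lemma
  fixes N :: "'w measure"
  assumes "case_prod f \<in> X \<Otimes>\<^sub>M N \<rightarrow>\<^sub>M X" and "case_prod v \<in> X \<Otimes>\<^sub>M N \<rightarrow>\<^sub>M borel"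
  shows measurable_iterate_PiM: "case_prod (iterate f n) \<in> X \<Otimes>\<^sub>M PiM {..<n} (\<lambda>_. N) \<rightarrow>\<^sub>M X"
    and measurable_iterate_work_PiM: "case_prod (iterate_work f v n) \<in> X \<Otimes>\<^sub>M PiM {..<n} (\<lambda>_. N) \<rightarrow>\<^sub>M borel"
    and measurable_iterate_reverse_PiM:
      "(\<lambda>(x, w). iterate f n x (reverse_noise n w)) \<in> X \<Otimes>\<^sub>M PiM {..<n} (\<lambda>_. N) \<rightarrow>\<^sub>M X"
    and measurable_iterate_work_reverse_PiM:
      "(\<lambda>(x, w). iterate_work f v n x (reverse_noise n w)) \<in> X \<Otimes>\<^sub>M PiM {..<n} (\<lambda>_. N) \<rightarrow>\<^sub>M borel"
proof -
  have comp: "(\<lambda>t. snd t i) \<in> X \<Otimes>\<^sub>M PiM {..<n} (\<lambda>_. N) \<rightarrow>\<^sub>M N"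
    "(\<lambda>t. reverse_noise n (snd t) i) \<in> X \<Otimes>\<^sub>M PiM {..<n} (\<lambda>_. N) \<rightarrow>\<^sub>M N" if "i < n" for i
    using that by (auto simp: reverse_noise_def)
  note iter = measurable_iterate[OF assms(1) measurable_fst] and work = measurable_iterate_work[OF assms measurable_fst]
  show "case_prod (iterate f n) \<in> X \<Otimes>\<^sub>M PiM {..<n} (\<lambda>_. N) \<rightarrow>\<^sub>M X"
    using iter[OF comp(1)] by (simp add: split_beta')
  show "case_prod (iterate_work f v n) \<in> X \<Otimes>\<^sub>M PiM {..<n} (\<lambda>_. N) \<rightarrow>\<^sub>M borel"
    using work[OF comp(1)] by (simp add: split_beta')
  show "(\<lambda>(x, w). iterate f n x (reverse_noise n w)) \<in> X \<Otimes>\<^sub>M PiM {..<n} (\<lambda>_. N) \<rightarrow>\<^sub>M X"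
    using iter[OF comp(2)] by (simp add: split_beta')
  show "(\<lambda>(x, w). iterate_work f v n x (reverse_noise n w)) \<in> X \<Otimes>\<^sub>M PiM {..<n} (\<lambda>_. N) \<rightarrow>\<^sub>M borel"
    using work[OF comp(2)] by (simp add: split_beta')
qed

lemma nn_integral_reverse_noise:
  assumes "prob_space N" and "\<Phi> \<in> borel_measurable (PiM {..<n} (\<lambda>_. N))"
  shows "(\<integral>\<^sup>+w. \<Phi> (reverse_noise n w) \<partial>PiM {..<n} (\<lambda>_. N)) = (\<integral>\<^sup>+w. \<Phi> w \<partial>PiM {..<n} (\<lambda>_. N))"
proof -
  have "distr (PiM {..<n} (\<lambda>_. N)) (PiM {..<n} (\<lambda>_. N)) (reverse_noise n) = PiM {..<n} (\<lambda>_. N)"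
  proof -
    have "inj_on (\<lambda>i. n - 1 - i) {..<n}"
      by (auto intro!: inj_onI)
    then show ?thesis
      using distr_PiM_reindex[of "{..<n}" "\<lambda>_. N" "\<lambda>i. n - 1 - i" "{..<n}"] assms(1)
      by (auto simp: reverse_noise_def[abs_def])
  qed
  moreover have "reverse_noise n \<in> PiM {..<n} (\<lambda>_. N) \<rightarrow>\<^sub>M PiM {..<n} (\<lambda>_. N)"
    unfolding reverse_noise_def by measurable
  ultimately show ?thesis
    using assms(2) by (metis nn_integral_distr)
qed

lemma skew_balanced_iterate_reverse:
  fixes f :: "'d::finite state \<Rightarrow> 'w \<Rightarrow> 'd state"
  assumes bal: "skew_balanced N f v f v" and N: "prob_space N"
    and f: "case_prod f \<in> borel \<Otimes>\<^sub>M N \<rightarrow>\<^sub>M borel" and v: "case_prod v \<in> borel \<Otimes>\<^sub>M N \<rightarrow>\<^sub>M borel"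
  shows "skew_balanced (PiM {..<n} (\<lambda>_. N)) (iterate f n) (iterate_work f v n)
    (\<lambda>z w. iterate f n z (reverse_noise n w)) (\<lambda>z w. iterate_work f v n z (reverse_noise n w))"
proof (induction n)
  case 0
  interpret prob_space "PiM {} (\<lambda>_::nat. N)"
    using N by (rule prob_space_PiM)
  show ?case
  proof (rule skew_balancedI, goal_cases)
    case (1 F)
    then show ?case
      using nn_integral_lborel_flip[of "\<lambda>x. F (x, x, 0)"] by (simp add: emeasure_space_1)
  qed
next
  case (Suc n)
  note [measurable] = f v measurable_iterate_PiM[OF f v] measurable_iterate_work_PiM[OF f v]
    measurable_iterate_reverse_PiM[OF f v] measurable_iterate_work_reverse_PiM[OF f v]
  have PiM: "prob_space (PiM {..<n} (\<lambda>_. N))"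
    using N by (rule prob_space_PiM)
  have "skew_balanced (N \<Otimes>\<^sub>M PiM {..<n} (\<lambda>_. N))
    (\<lambda>x (\<eta>, w). f (iterate f n x w) \<eta>) (\<lambda>x (\<eta>, w). iterate_work f v n x w + v (iterate f n x w) \<eta>)
    (\<lambda>z (\<eta>, w). iterate f n (f z \<eta>) (reverse_noise n w))
    (\<lambda>z (\<eta>, w). v z \<eta> + iterate_work f v n (f z \<eta>) (reverse_noise n w))"
    by (rule skew_balanced_compose[OF Suc.IH bal PiM N]) measurable
  then have "skew_balanced (N \<Otimes>\<^sub>M PiM {..<n} (\<lambda>_. N))
    (\<lambda>x w. iterate f (Suc n) x ((snd w)(n := fst w)))
    (\<lambda>x w. iterate_work f v (Suc n) x ((snd w)(n := fst w)))
    (\<lambda>z w. iterate f (Suc n) z (reverse_noise (Suc n) ((snd w)(n := fst w))))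
    (\<lambda>z w. iterate_work f v (Suc n) z (reverse_noise (Suc n) ((snd w)(n := fst w))))"
    unfolding iterate_reverse_noise_Suc iterate_work_reverse_noise_Suc
    by (simp only: split_beta' iterate.simps iterate_work.simps iterate_fun_upd iterate_work_fun_upd
      order_refl fun_upd_same)
  then show ?case
  proof (rule skew_balanced_distr[where \<phi> = "\<lambda>w. (snd w)(n := fst w)"])
    show "distr (N \<Otimes>\<^sub>M PiM {..<n} (\<lambda>_. N)) (PiM {..<Suc n} (\<lambda>_. N)) (\<lambda>w. (snd w)(n := fst w))
      = PiM {..<Suc n} (\<lambda>_. N)"
      using distr_pair_PiM_eq_PiM[of "{..<n}" "\<lambda>_. N" n] N by (simp add: lessThan_Suc split_beta')
    show "(\<lambda>w. (snd w)(n := fst w)) \<in> N \<Otimes>\<^sub>M PiM {..<n} (\<lambda>_. N) \<rightarrow>\<^sub>M PiM {..<Suc n} (\<lambda>_. N)"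
      by (rule measurable_fun_upd[where J = "{..<n}"]) auto
  qed (rule measurable_iterate_PiM[OF f v] measurable_iterate_work_PiM[OF f v]
    measurable_iterate_reverse_PiM[OF f v] measurable_iterate_work_reverse_PiM[OF f v])+
qed

lemma skew_balanced_iterate:
  fixes f :: "'d::finite state \<Rightarrow> 'w \<Rightarrow> 'd state"
  assumes bal: "skew_balanced N f v f v" and N: "prob_space N"
    and f: "case_prod f \<in> borel \<Otimes>\<^sub>M N \<rightarrow>\<^sub>M borel" and v: "case_prod v \<in> borel \<Otimes>\<^sub>M N \<rightarrow>\<^sub>M borel"
  shows "skew_balanced (PiM {..<n} (\<lambda>_. N)) (iterate f n) (iterate_work f v n) (iterate f n) (iterate_work f v n)"
proof (rule skew_balancedI, goal_cases)
  case (1 F)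
  note [measurable] = 1 measurable_iterate_PiM[OF f v] measurable_iterate_work_PiM[OF f v]
  have "(\<integral>\<^sup>+w. F (flip (iterate f n z (reverse_noise n w)), flip z, - iterate_work f v n z (reverse_noise n w))
        * ennreal (exp (iterate_work f v n z (reverse_noise n w))) \<partial>PiM {..<n} (\<lambda>_. N))
      = (\<integral>\<^sup>+w. F (flip (iterate f n z w), flip z, - iterate_work f v n z w)
        * ennreal (exp (iterate_work f v n z w)) \<partial>PiM {..<n} (\<lambda>_. N))" for z
    by (rule nn_integral_reverse_noise[OF N, of "\<lambda>w. F (flip (iterate f n z w), flip z, - iterate_work f v n z w)
        * ennreal (exp (iterate_work f v n z w))"]) measurable
  then show ?case
    using skew_balancedD[OF skew_balanced_iterate_reverse[OF assms], of F] 1 by simp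
qed

section \<open>One step of the integrator\<close>

definition half_step :: "real \<Rightarrow> real \<Rightarrow> real" where
  "half_step eps sig = eps / (2 * sig\<^sup>2)"

definition kinetic :: "real \<Rightarrow> real^'d \<Rightarrow> real" where
  "kinetic sig p = (norm p)\<^sup>2 / (2 * sig\<^sup>2)"

definition leap_noise :: "real \<Rightarrow> real \<Rightarrow> real^'d \<Rightarrow> real^'d \<Rightarrow> real^'d \<Rightarrow> real^'d" where
  "leap_noise eps beta g p p' = (1 + eps * beta) *\<^sub>R p' - (1 - eps * beta) *\<^sub>R p + eps *\<^sub>R g"

definition kick_work :: "real \<Rightarrow> real \<Rightarrow> real^'d \<Rightarrow> real^'d \<Rightarrow> real^'d \<Rightarrow> real" where
  "kick_work eps sig g p p' = kinetic sig p' - kinetic sig p + rho_upd eps sig g p p' 0"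

definition leap :: "real \<Rightarrow> real \<Rightarrow> real \<Rightarrow> (real^'d \<Rightarrow> real^'d) \<Rightarrow> 'd::finite state \<Rightarrow> real^'d \<Rightarrow> 'd state" where
  "leap eps sig beta G x \<eta> =
    (let q = fst x + half_step eps sig *\<^sub>R snd x; p' = mom_upd eps beta (G q) \<eta> (snd x)
     in (q + half_step eps sig *\<^sub>R p', p'))"

definition leap_work :: "real \<Rightarrow> real \<Rightarrow> real \<Rightarrow> (real^'d \<Rightarrow> real^'d) \<Rightarrow> 'd::finite state \<Rightarrow> real^'d \<Rightarrow> real" where
  "leap_work eps sig beta G x \<eta> =
    (let q = fst x + half_step eps sig *\<^sub>R snd x; p' = mom_upd eps beta (G q) \<eta> (snd x)
     in kick_work eps sig (G q) (snd x) p')"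

lemma borel_measurable_kinetic[measurable]: "kinetic sig \<in> borel_measurable borel"
  unfolding kinetic_def by measurable

lemma borel_measurable_mom_upd[measurable]:
  fixes g \<eta> p :: "'a \<Rightarrow> real^'d"
  assumes [measurable]: "g \<in> borel_measurable M" "\<eta> \<in> borel_measurable M" "p \<in> borel_measurable M"
  shows "(\<lambda>x. mom_upd eps beta (g x) (\<eta> x) (p x)) \<in> borel_measurable M"
  unfolding mom_upd_def by measurable

lemma borel_measurable_rho_upd[measurable]:
  fixes g p p' :: "'a \<Rightarrow> real^'d"
  assumes [measurable]: "g \<in> borel_measurable M" "p \<in> borel_measurable M" "p' \<in> borel_measurable M"
    "\<rho> \<in> borel_measurable M"
  shows "(\<lambda>x. rho_upd eps sig (g x) (p x) (p' x) (\<rho> x)) \<in> borel_measurable M"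
  unfolding rho_upd_def by measurable

lemma mom_upd_leap_noise:
  assumes "1 + eps * beta \<noteq> 0"
  shows "mom_upd eps beta g (leap_noise eps beta g p p') p = p'"
proof -
  have "mom_upd eps beta g (leap_noise eps beta g p p') p = (1 / (1 + eps * beta)) *\<^sub>R ((1 + eps * beta) *\<^sub>R p')"
    unfolding mom_upd_def leap_noise_def by (simp add: algebra_simps)
  with assms show ?thesis by simp
qed

lemma
  assumes "1 + eps * beta \<noteq> 0"
  shows leap_leap_noise: "leap eps sig beta G (q - half_step eps sig *\<^sub>R p, p) (leap_noise eps beta (G q) p p')
      = (q + half_step eps sig *\<^sub>R p', p')"
    and leap_work_leap_noise: "leap_work eps sig beta G (q - half_step eps sig *\<^sub>R p, p) (leap_noise eps beta (G q) p p')
      = kick_work eps sig (G q) p p'"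
  by (simp_all add: leap_def leap_work_def Let_def mom_upd_leap_noise[OF assms])

lemma nn_integral_leap_noise:
  fixes G :: "real^'d \<Rightarrow> real^'d" and \<Psi> :: "'d::finite state \<times> 'd state \<times> real \<Rightarrow> ennreal"
  assumes c: "eps * beta > 0" and [measurable]: "G \<in> borel_measurable borel" "\<Psi> \<in> borel_measurable borel"
  shows "(\<integral>\<^sup>+\<eta>. ennreal (gauss_dens s \<eta>) * \<Psi> ((q - half_step eps sig *\<^sub>R p, p),
        leap eps sig beta G (q - half_step eps sig *\<^sub>R p, p) \<eta>, leap_work eps sig beta G (q - half_step eps sig *\<^sub>R p, p) \<eta>) \<partial>lborel)
    = ennreal ((1 + eps * beta) ^ CARD('d)) * (\<integral>\<^sup>+p'. ennreal (gauss_dens s (leap_noise eps beta (G q) p p'))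
        * \<Psi> ((q - half_step eps sig *\<^sub>R p, p), (q + half_step eps sig *\<^sub>R p', p'), kick_work eps sig (G q) p p') \<partial>lborel)"
proof -
  let ?x = "(q - half_step eps sig *\<^sub>R p, p)"
  let ?f = "\<lambda>\<eta>. ennreal (gauss_dens s \<eta>) * \<Psi> (?x, leap eps sig beta G ?x \<eta>, leap_work eps sig beta G ?x \<eta>)"
  have a: "1 + eps * beta \<noteq> 0" "\<bar>1 + eps * beta\<bar> = 1 + eps * beta"
    using c by auto
  have "?f \<in> borel_measurable borel"
    unfolding leap_def leap_work_def Let_def kick_work_def by measurable
  from nn_integral_lborel_affine[OF a(1) this, of "eps *\<^sub>R G q - (1 - eps * beta) *\<^sub>R p"]
  have "integral\<^sup>N lborel ?f = ennreal ((1 + eps * beta) ^ CARD('d))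
      * (\<integral>\<^sup>+p'. ?f (eps *\<^sub>R G q - (1 - eps * beta) *\<^sub>R p + (1 + eps * beta) *\<^sub>R p') \<partial>lborel)"
    by (simp only: a(2) DIM_cart DIM_real mult_1_right)
  moreover have "eps *\<^sub>R G q - (1 - eps * beta) *\<^sub>R p + (1 + eps * beta) *\<^sub>R p' = leap_noise eps beta (G q) p p'"
    for p' by (simp add: leap_noise_def algebra_simps)
  ultimately show ?thesis
    by (simp only: leap_leap_noise[OF a(1)] leap_work_leap_noise[OF a(1)])
qed

lemma nn_integral_leap_midpoint:
  fixes G :: "real^'d \<Rightarrow> real^'d" and \<Psi> :: "'d::finite state \<times> 'd state \<times> real \<Rightarrow> ennreal"
  assumes c: "eps * beta > 0" and [measurable]: "G \<in> borel_measurable borel" "\<Psi> \<in> borel_measurable borel"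
  shows "(\<integral>\<^sup>+x. \<integral>\<^sup>+\<eta>. \<Psi> (x, leap eps sig beta G x \<eta>, leap_work eps sig beta G x \<eta>) \<partial>gauss_vec s \<partial>lborel)
    = ennreal ((1 + eps * beta) ^ CARD('d)) * (\<integral>\<^sup>+q. \<integral>\<^sup>+p. \<integral>\<^sup>+p'. ennreal (gauss_dens s (leap_noise eps beta (G q) p p'))
        * \<Psi> ((q - half_step eps sig *\<^sub>R p, p), (q + half_step eps sig *\<^sub>R p', p'), kick_work eps sig (G q) p p')
      \<partial>lborel \<partial>lborel \<partial>lborel)"
    (is "_ = ?C * (\<integral>\<^sup>+q. \<integral>\<^sup>+p. ?R q p \<partial>lborel \<partial>lborel)")
proof -
  let ?I = "\<lambda>x \<eta>. ennreal (gauss_dens s \<eta>) * \<Psi> (x, leap eps sig beta G x \<eta>, leap_work eps sig beta G x \<eta>)"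
  have [measurable]: "(\<lambda>(x, \<eta>). ?I x \<eta>) \<in> borel_measurable (borel \<Otimes>\<^sub>M lborel)"
    unfolding leap_def leap_work_def Let_def kick_work_def by measurable
  have "(\<integral>\<^sup>+x. \<integral>\<^sup>+\<eta>. \<Psi> (x, leap eps sig beta G x \<eta>, leap_work eps sig beta G x \<eta>) \<partial>gauss_vec s \<partial>lborel)
      = (\<integral>\<^sup>+x. \<integral>\<^sup>+\<eta>. ?I x \<eta> \<partial>lborel \<partial>lborel)"
    unfolding gauss_vec_eq_density
    by (intro nn_integral_cong, subst nn_integral_density) (auto simp: leap_def leap_work_def Let_def kick_work_def)
  also have "\<dots> = (\<integral>\<^sup>+q. \<integral>\<^sup>+p. \<integral>\<^sup>+\<eta>. ?I (q, p) \<eta> \<partial>lborel \<partial>lborel \<partial>lborel)"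
    by (rule nn_integral_lborel_pair) simp
  also have "\<dots> = (\<integral>\<^sup>+p. \<integral>\<^sup>+q. \<integral>\<^sup>+\<eta>. ?I (q, p) \<eta> \<partial>lborel \<partial>lborel \<partial>lborel)"
    by (rule nn_integral_lborel_swap) simp
  also have "\<dots> = (\<integral>\<^sup>+p. \<integral>\<^sup>+q. \<integral>\<^sup>+\<eta>. ?I (- (half_step eps sig *\<^sub>R p) + q, p) \<eta> \<partial>lborel \<partial>lborel \<partial>lborel)"
    by (intro nn_integral_cong nn_integral_lborel_translate) simp
  also have "\<dots> = (\<integral>\<^sup>+p. \<integral>\<^sup>+q. ?C * ?R q p \<partial>lborel \<partial>lborel)"
    by (intro nn_integral_cong) (simp add: nn_integral_leap_noise[OF c])
  also have "\<dots> = (\<integral>\<^sup>+q. \<integral>\<^sup>+p. ?C * ?R q p \<partial>lborel \<partial>lborel)"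
    by (rule nn_integral_lborel_swap[symmetric]) (unfold leap_noise_def kick_work_def, measurable)
  also have "\<dots> = (\<integral>\<^sup>+q. ?C * \<integral>\<^sup>+p. ?R q p \<partial>lborel \<partial>lborel)"
    by (intro nn_integral_cong nn_integral_cmult) (unfold leap_noise_def kick_work_def, measurable)
  also have "\<dots> = ?C * (\<integral>\<^sup>+q. \<integral>\<^sup>+p. ?R q p \<partial>lborel \<partial>lborel)"
    by (rule nn_integral_cmult) (unfold leap_noise_def kick_work_def, measurable)
  finally show ?thesis .
qed

lemma kick_work_reverse: "kick_work eps sig g (- p') (- p) = - kick_work eps sig g p p'"
proof -
  have "eps * (g \<bullet> (- p' - p)) = - (eps * (g \<bullet> (p + p')))"
    by (simp add: inner_diff_right inner_add_right algebra_simps)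
  then show ?thesis
    by (simp add: kick_work_def kinetic_def rho_upd_def)
qed

lemma norm_leap_noise_reverse:
  assumes "sig \<noteq> 0"
  shows "(norm (leap_noise eps beta g p p'))\<^sup>2 - (norm (leap_noise eps beta g (- p') (- p)))\<^sup>2
    = 8 * (eps * beta) * sig\<^sup>2 * kick_work eps sig g p p'"
proof -
  have "(norm (leap_noise eps beta g p p'))\<^sup>2 - (norm (leap_noise eps beta g (- p') (- p)))\<^sup>2
      = 4 * (eps * beta) * ((norm p')\<^sup>2 - (norm p)\<^sup>2 + eps * (g \<bullet> (p + p')))"
    unfolding leap_noise_def power2_norm_eq_inner by (simp add: inner_simps inner_commute algebra_simps)
  also have "(norm p')\<^sup>2 - (norm p)\<^sup>2 + eps * (g \<bullet> (p + p')) = 2 * sig\<^sup>2 * kick_work eps sig g p p'"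
    using assms by (simp add: kick_work_def kinetic_def rho_upd_def field_simps)
  finally show ?thesis by simp
qed

text \<open>This is where the noise variance \<open>4 eps beta sig\<^sup>2\<close> matters: the backward noise is more likely
  than the forward noise by exactly the factor \<open>exp\<close> of the work.\<close>
lemma gauss_dens_leap_noise_reverse:
  assumes "eps * beta \<noteq> 0" "sig \<noteq> 0" and s: "s\<^sup>2 = 4 * (eps * beta) * sig\<^sup>2"
  shows "gauss_dens s (leap_noise eps beta g (- p') (- p)) * exp (- kick_work eps sig g p p')
    = gauss_dens s (leap_noise eps beta g p p')"
proof -
  have exponent: "- (norm (leap_noise eps beta g (- p') (- p)))\<^sup>2 / (2 * s\<^sup>2) - kick_work eps sig g p p'
      = - (norm (leap_noise eps beta g p p'))\<^sup>2 / (2 * s\<^sup>2)"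
    using norm_leap_noise_reverse[OF assms(2), of eps beta g p p'] assms by (simp add: s field_simps)
  show ?thesis
    unfolding gauss_dens_eq mult.assoc exp_add[symmetric] exponent[symmetric] by (simp add: algebra_simps)
qed

text \<open>The reflection \<open>(p, p') \<mapsto> (- p', - p)\<close> of the momenta around a fixed midpoint turns
  forward leaps into flipped backward ones.\<close>
lemma nn_integral_leap_reverse:
  fixes F :: "'d::finite state \<times> 'd state \<times> real \<Rightarrow> ennreal"
  assumes "eps * beta \<noteq> 0" "sig \<noteq> 0" and s: "s\<^sup>2 = 4 * (eps * beta) * sig\<^sup>2"
    and [measurable]: "F \<in> borel_measurable borel"
  defines "h \<equiv> half_step eps sig"
  shows "(\<integral>\<^sup>+p. \<integral>\<^sup>+p'. ennreal (gauss_dens s (leap_noise eps beta g p p'))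
        * (F (flip (q + h *\<^sub>R p', p'), flip (q - h *\<^sub>R p, p), - kick_work eps sig g p p')
          * ennreal (exp (kick_work eps sig g p p'))) \<partial>lborel \<partial>lborel)
    = (\<integral>\<^sup>+p. \<integral>\<^sup>+p'. ennreal (gauss_dens s (leap_noise eps beta g p p'))
        * F ((q - h *\<^sub>R p, p), (q + h *\<^sub>R p', p'), kick_work eps sig g p p') \<partial>lborel \<partial>lborel)"
proof -
  have pointwise: "ennreal (gauss_dens s (leap_noise eps beta g (- p') (- p)))
      * (F (flip (q + h *\<^sub>R (- p), - p), flip (q - h *\<^sub>R (- p'), - p'), - kick_work eps sig g (- p') (- p))
        * ennreal (exp (kick_work eps sig g (- p') (- p))))
    = ennreal (gauss_dens s (leap_noise eps beta g p p'))
      * F ((q - h *\<^sub>R p, p), (q + h *\<^sub>R p', p'), kick_work eps sig g p p')" for p p'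
  proof -
    have "ennreal (gauss_dens s (leap_noise eps beta g (- p') (- p)))
        * (F (flip (q + h *\<^sub>R (- p), - p), flip (q - h *\<^sub>R (- p'), - p'), - kick_work eps sig g (- p') (- p))
          * ennreal (exp (kick_work eps sig g (- p') (- p))))
      = ennreal (gauss_dens s (leap_noise eps beta g (- p') (- p))) * ennreal (exp (- kick_work eps sig g p p'))
        * F ((q - h *\<^sub>R p, p), (q + h *\<^sub>R p', p'), kick_work eps sig g p p')"
      by (simp add: flip_def kick_work_reverse mult_ac)
    also have "\<dots> = ennreal (gauss_dens s (leap_noise eps beta g p p'))
        * F ((q - h *\<^sub>R p, p), (q + h *\<^sub>R p', p'), kick_work eps sig g p p')"
      using gauss_dens_leap_noise_reverse[OF assms(1-3), of g p' p]
      by (simp add: ennreal_mult'[symmetric] gauss_dens_nonneg)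
    finally show ?thesis .
  qed
  have "(\<integral>\<^sup>+p. \<integral>\<^sup>+p'. ennreal (gauss_dens s (leap_noise eps beta g p p'))
        * (F (flip (q + h *\<^sub>R p', p'), flip (q - h *\<^sub>R p, p), - kick_work eps sig g p p')
          * ennreal (exp (kick_work eps sig g p p'))) \<partial>lborel \<partial>lborel)
    = (\<integral>\<^sup>+p. \<integral>\<^sup>+p'. ennreal (gauss_dens s (leap_noise eps beta g (- p') (- p)))
        * (F (flip (q + h *\<^sub>R (- p), - p), flip (q - h *\<^sub>R (- p'), - p'), - kick_work eps sig g (- p') (- p))
          * ennreal (exp (kick_work eps sig g (- p') (- p)))) \<partial>lborel \<partial>lborel)"
    by (rule nn_integral_lborel_reflect) (unfold leap_noise_def kick_work_def, measurable)
  also have "\<dots> = (\<integral>\<^sup>+p. \<integral>\<^sup>+p'. ennreal (gauss_dens s (leap_noise eps beta g p p'))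
        * F ((q - h *\<^sub>R p, p), (q + h *\<^sub>R p', p'), kick_work eps sig g p p') \<partial>lborel \<partial>lborel)"
    by (intro nn_integral_cong) (rule pointwise)
  finally show ?thesis .
qed

lemma skew_balanced_leap:
  fixes G :: "real^'d \<Rightarrow> real^'d"
  assumes c: "eps * beta > 0" and "sig > 0" and s: "s = sqrt (4 * eps * beta * sig\<^sup>2)"
    and [measurable]: "G \<in> borel_measurable borel"
  shows "skew_balanced (gauss_vec s) (leap eps sig beta G) (leap_work eps sig beta G)
    (leap eps sig beta G) (leap_work eps sig beta G)"
proof (rule skew_balancedI, goal_cases)
  case (1 F)
  define \<Psi> where "\<Psi> t = F (flip (fst (snd t)), flip (fst t), - snd (snd t)) * ennreal (exp (snd (snd t)))"
    for t :: "'d state \<times> 'd state \<times> real"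
  note [measurable] = 1
  have [measurable]: "\<Psi> \<in> borel_measurable borel"
    unfolding \<Psi>_def by measurable
  have "eps * beta \<noteq> 0" "sig \<noteq> 0"
    using c \<open>sig > 0\<close> by linarith+
  have "0 \<le> 4 * (eps * beta) * sig\<^sup>2"
    using c by simp
  then have "s\<^sup>2 = 4 * (eps * beta) * sig\<^sup>2"
    by (simp add: s mult.assoc)
  note reverse = nn_integral_leap_reverse[OF \<open>eps * beta \<noteq> 0\<close> \<open>sig \<noteq> 0\<close> this 1]
  have "(\<integral>\<^sup>+x. \<integral>\<^sup>+\<eta>. F (x, leap eps sig beta G x \<eta>, leap_work eps sig beta G x \<eta>) \<partial>gauss_vec s \<partial>lborel)
    = ennreal ((1 + eps * beta) ^ CARD('d)) * (\<integral>\<^sup>+q. \<integral>\<^sup>+p. \<integral>\<^sup>+p'. ennreal (gauss_dens s (leap_noise eps beta (G q) p p'))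
        * F ((q - half_step eps sig *\<^sub>R p, p), (q + half_step eps sig *\<^sub>R p', p'), kick_work eps sig (G q) p p')
      \<partial>lborel \<partial>lborel \<partial>lborel)"
    by (rule nn_integral_leap_midpoint[OF c]) measurable
  also have "\<dots> = ennreal ((1 + eps * beta) ^ CARD('d)) * (\<integral>\<^sup>+q. \<integral>\<^sup>+p. \<integral>\<^sup>+p'. ennreal (gauss_dens s (leap_noise eps beta (G q) p p'))
        * \<Psi> ((q - half_step eps sig *\<^sub>R p, p), (q + half_step eps sig *\<^sub>R p', p'), kick_work eps sig (G q) p p')
      \<partial>lborel \<partial>lborel \<partial>lborel)"
    by (simp only: \<Psi>_def fst_conv snd_conv reverse)
  also have "\<dots> = (\<integral>\<^sup>+x. \<integral>\<^sup>+\<eta>. \<Psi> (x, leap eps sig beta G x \<eta>, leap_work eps sig beta G x \<eta>) \<partial>gauss_vec s \<partial>lborel)"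
    by (rule nn_integral_leap_midpoint[OF c, symmetric]) measurable
  finally show ?case
    by (simp add: \<Psi>_def)
qed

section \<open>The AMAGOLD transition\<close>

locale amagold =
  fixes eps sig beta :: real and Q :: "'u measure" and gU :: "'u \<Rightarrow> real^'d::finite \<Rightarrow> real^'d"
  assumes eps_pos: "eps > 0" and sig_pos: "sig > 0" and beta_pos: "beta > 0"
    and prob_space_Q: "prob_space Q"
    and gU_measurable: "(\<lambda>(u, x). gU u x) \<in> Q \<Otimes>\<^sub>M borel \<rightarrow>\<^sub>M borel"
begin

definition step_noise :: "((real^'d) \<times> 'u) measure" where
  "step_noise = gauss_vec (sqrt (4 * eps * beta * sig\<^sup>2)) \<Otimes>\<^sub>M Q"

definition amag_leap :: "'d state \<Rightarrow> (real^'d) \<times> 'u \<Rightarrow> 'd state" where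
  "amag_leap x \<omega> = leap eps sig beta (gU (snd \<omega>)) x (fst \<omega>)"

definition amag_leap_work :: "'d state \<Rightarrow> (real^'d) \<times> 'u \<Rightarrow> real" where
  "amag_leap_work x \<omega> = leap_work eps sig beta (gU (snd \<omega>)) x (fst \<omega>)"

abbreviation trajectory_noise :: "nat \<Rightarrow> (nat \<Rightarrow> (real^'d) \<times> 'u) measure" where
  "trajectory_noise n \<equiv> PiM {..<n} (\<lambda>_. step_noise)"

lemma measurable_gU[measurable (raw)]:
  "f \<in> M \<rightarrow>\<^sub>M Q \<Longrightarrow> g \<in> borel_measurable M \<Longrightarrow> (\<lambda>x. gU (f x) (g x)) \<in> borel_measurable M"
  using measurable_Pair_compose_split[OF gU_measurable] .

lemma prob_space_step_noise: "prob_space step_noise"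
proof -
  have "0 < sqrt (4 * eps * beta * sig\<^sup>2)"
    using eps_pos beta_pos sig_pos by simp
  then show ?thesis
    unfolding step_noise_def using prob_space_Q by (intro prob_space_pair prob_space_gauss_vec)
qed

lemma prob_space_trajectory_noise: "prob_space (trajectory_noise n)"
  using prob_space_step_noise by (rule prob_space_PiM)

lemma measurable_amag_leap: "case_prod amag_leap \<in> borel \<Otimes>\<^sub>M step_noise \<rightarrow>\<^sub>M borel"
  unfolding amag_leap_def leap_def Let_def step_noise_def by measurable

lemma measurable_amag_leap_work: "case_prod amag_leap_work \<in> borel \<Otimes>\<^sub>M step_noise \<rightarrow>\<^sub>M borel"
  unfolding amag_leap_work_def leap_work_def kick_work_def Let_def step_noise_def by measurable

lemma skew_balanced_amag_leap: "skew_balanced step_noise amag_leap amag_leap_work amag_leap amag_leap_work"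
  unfolding step_noise_def
proof (rule skew_balanced_mixture)
  fix u assume "u \<in> space Q"
  then have "gU u \<in> borel_measurable borel"
    using measurable_Pair2[OF gU_measurable] by simp
  then show "skew_balanced (gauss_vec (sqrt (4 * eps * beta * sig\<^sup>2)))
      (\<lambda>x e. amag_leap x (e, u)) (\<lambda>x e. amag_leap_work x (e, u))
      (\<lambda>x e. amag_leap x (e, u)) (\<lambda>x e. amag_leap_work x (e, u))"
    unfolding amag_leap_def amag_leap_work_def fst_conv snd_conv
    using eps_pos beta_pos sig_pos by (intro skew_balanced_leap) simp_all
qed (use eps_pos beta_pos sig_pos prob_space_Q measurable_amag_leap measurable_amag_leap_work
  in \<open>auto simp: step_noise_def intro: prob_space_gauss_vec\<close>)

lemma skew_balanced_trajectory:
  "skew_balanced (trajectory_noise n) (iterate amag_leap n) (iterate_work amag_leap amag_leap_work n)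
    (iterate amag_leap n) (iterate_work amag_leap amag_leap_work n)"
  by (rule skew_balanced_iterate[OF skew_balanced_amag_leap prob_space_step_noise
    measurable_amag_leap measurable_amag_leap_work])

lemma measurable_trajectory[measurable (raw)]:
  "x \<in> M \<rightarrow>\<^sub>M borel \<Longrightarrow> w \<in> M \<rightarrow>\<^sub>M trajectory_noise n \<Longrightarrow>
    (\<lambda>t. iterate amag_leap n (x t) (w t)) \<in> M \<rightarrow>\<^sub>M borel"
  by (rule measurable_Pair_compose_split[OF measurable_iterate_PiM[OF measurable_amag_leap measurable_amag_leap_work]])

lemma measurable_trajectory_work[measurable (raw)]:
  "x \<in> M \<rightarrow>\<^sub>M borel \<Longrightarrow> w \<in> M \<rightarrow>\<^sub>M trajectory_noise n \<Longrightarrow>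
    (\<lambda>t. iterate_work amag_leap amag_leap_work n (x t) (w t)) \<in> borel_measurable M"
  by (rule measurable_Pair_compose_split[OF measurable_iterate_work_PiM[OF measurable_amag_leap measurable_amag_leap_work]])

text \<open>The inner loop of AMAGOLD is the chain of leaps started at the state: \<open>\<theta>\<^sub>t\<close> is the midpoint
  of the \<open>t\<close>-th leap, and \<open>\<rho>\<close> is the accumulated work minus the kinetic energy gained.\<close>
lemma amag_pre_eq_iterate:
  "amag_pre eps sig beta gU (fst x) (snd x) (\<lambda>t. fst (w t)) (\<lambda>t. snd (w t)) t
   = (let y = iterate amag_leap t x w
      in (fst y + half_step eps sig *\<^sub>R snd y, snd y,
          iterate_work amag_leap amag_leap_work t x w - kinetic sig (snd y) + kinetic sig (snd x)))"
proof (induction t)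
  case (Suc t)
  obtain q p where y: "iterate amag_leap t x w = (q, p)"
    by fastforce
  define g where "g = gU (snd (w t)) (q + half_step eps sig *\<^sub>R p)"
  define p' where "p' = mom_upd eps beta g (fst (w t)) p"
  have "iterate amag_leap (Suc t) x w = (q + half_step eps sig *\<^sub>R p + half_step eps sig *\<^sub>R p', p')"
    by (simp add: y amag_leap_def leap_def Let_def g_def p'_def)
  moreover have "iterate_work amag_leap amag_leap_work (Suc t) x w
      = iterate_work amag_leap amag_leap_work t x w + kick_work eps sig g p p'"
    by (simp add: y amag_leap_work_def leap_work_def Let_def g_def p'_def)
  moreover have "amag_pre eps sig beta gU (fst x) (snd x) (\<lambda>t. fst (w t)) (\<lambda>t. snd (w t)) (Suc t)
      = (q + half_step eps sig *\<^sub>R p + (eps / sig\<^sup>2) *\<^sub>R p', p',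
         rho_upd eps sig g p p' (iterate_work amag_leap amag_leap_work t x w - kinetic sig p + kinetic sig (snd x)))"
    using Suc.IH by (simp add: y g_def p'_def Let_def)
  moreover have "(eps / sig\<^sup>2) *\<^sub>R p' = half_step eps sig *\<^sub>R p' + half_step eps sig *\<^sub>R p'"
    by (simp add: half_step_def scaleR_add_left[symmetric])
  ultimately show ?case
    by (simp add: kick_work_def rho_upd_def algebra_simps)
qed (simp add: half_step_def)

lemma amag_prop_eq_iterate:
  assumes "T \<ge> 1"
  shows "amag_prop eps sig beta gU (fst x) (snd x) (\<lambda>t. fst (w t)) (\<lambda>t. snd (w t)) T
   = (let y = iterate amag_leap T x w
      in (fst y, snd y, iterate_work amag_leap amag_leap_work T x w - kinetic sig (snd y) + kinetic sig (snd x)))"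
proof -
  obtain m where T: "T = Suc m"
    using assms by (cases T) auto
  obtain q p where y: "iterate amag_leap m x w = (q, p)"
    by fastforce
  define g where "g = gU (snd (w m)) (q + half_step eps sig *\<^sub>R p)"
  define p' where "p' = mom_upd eps beta g (fst (w m)) p"
  have "iterate amag_leap T x w = (q + half_step eps sig *\<^sub>R p + half_step eps sig *\<^sub>R p', p')"
    by (simp add: T y amag_leap_def leap_def Let_def g_def p'_def)
  moreover have "iterate_work amag_leap amag_leap_work T x w
      = iterate_work amag_leap amag_leap_work m x w + kick_work eps sig g p p'"
    by (simp add: T y amag_leap_work_def leap_work_def Let_def g_def p'_def)
  moreover have "amag_prop eps sig beta gU (fst x) (snd x) (\<lambda>t. fst (w t)) (\<lambda>t. snd (w t)) T
      = (q + half_step eps sig *\<^sub>R p + half_step eps sig *\<^sub>R p', p',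
         rho_upd eps sig g p p' (iterate_work amag_leap amag_leap_work m x w - kinetic sig p + kinetic sig (snd x)))"
    by (simp add: T amag_prop_def amag_pre_eq_iterate y g_def p'_def Let_def half_step_def)
  ultimately show ?thesis
    by (simp add: kick_work_def rho_upd_def)
qed

end

section \<open>The Metropolis correction\<close>

lemma exp_mult_min_exp: "exp a * min 1 (exp (b - a)) = min (exp a) (exp (b :: real))"
  by (simp add: min_def exp_diff)

text \<open>Both sides equal \<open>min (exp (W - h)) (exp (- h'))\<close>.\<close>
lemma metropolis_skew_identity:
  fixes h h' W :: real
  shows "exp (- h) * exp W * min 1 (exp (h - h' - W)) = exp (- h') * min 1 (exp (h' - h + W))"
  using exp_mult_min_exp[of "W - h" "- h'"] exp_mult_min_exp[of "- h'" "W - h"]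
  by (simp add: exp_add[symmetric] min.commute algebra_simps)

lemma nn_integral_uniform_threshold:
  fixes f :: "'a \<Rightarrow> ennreal"
  assumes "0 \<le> a" "a \<le> 1"
  shows "(\<integral>\<^sup>+v. f (if c \<and> v < a then y else z) \<partial>uniform_measure lborel {0..1::real})
    = f y * ennreal (if c then a else 0) + f z * ennreal (1 - (if c then a else 0))"
proof -
  interpret prob_space "uniform_measure lborel {0..1::real}"
    by (rule prob_space_uniform_measure) auto
  have "{0..1::real} \<inter> {..<a} = {0..<a}" "{0..1::real} \<inter> {a..} = {a..1}"
    using assms by auto
  then have "emeasure (uniform_measure lborel {0..1::real}) {..<a} = ennreal a"
      "emeasure (uniform_measure lborel {0..1::real}) {a..} = ennreal (1 - a)"
    using assms by (simp_all add: divide_ennreal_def)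
  moreover have "(\<lambda>v. f (if c \<and> v < a then y else z)) = (\<lambda>v. f y * indicator {..<a} v + f z * indicator {a..} v)"
    if c
    using that by (auto simp: fun_eq_iff split: split_indicator)
  ultimately show ?thesis
    by (cases c) (simp_all add: emeasure_space_1 nn_integral_add nn_integral_cmult_indicator)
qed

locale amagold_chain = amagold eps sig beta Q gU
  for eps sig beta :: real and Q :: "'u measure" and gU :: "'u \<Rightarrow> real^'d::finite \<Rightarrow> real^'d" +
  fixes Theta :: "(real^'d) set" and U :: "real^'d \<Rightarrow> real" and T :: nat
  assumes Theta_sets[measurable]: "Theta \<in> sets borel"
    and U_measurable[measurable]: "U \<in> borel_measurable borel"
    and T_ge_1: "T \<ge> 1"
begin

definition hamiltonian :: "'d state \<Rightarrow> real" where
  "hamiltonian x = U (fst x) + kinetic sig (snd x)"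

definition gibbs :: "'d state \<Rightarrow> real" where
  "gibbs x = indicator Theta (fst x) * exp (- hamiltonian x)"

definition accept_prob :: "'d state \<Rightarrow> 'd state \<Rightarrow> real \<Rightarrow> real" where
  "accept_prob x y W = indicator Theta (fst y) * min 1 (exp (hamiltonian x - hamiltonian y + W))"

abbreviation proposal :: "'d state \<Rightarrow> (nat \<Rightarrow> (real^'d) \<times> 'u) \<Rightarrow> 'd state" where
  "proposal \<equiv> iterate amag_leap T"

abbreviation proposal_work :: "'d state \<Rightarrow> (nat \<Rightarrow> (real^'d) \<times> 'u) \<Rightarrow> real" where
  "proposal_work \<equiv> iterate_work amag_leap amag_leap_work T"

abbreviation kernel :: "'d state \<Rightarrow> 'd state measure" where
  "kernel \<equiv> amag_kernel Theta U eps sig beta gU Q T"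

lemma borel_measurable_hamiltonian[measurable]: "hamiltonian \<in> borel_measurable borel"
  unfolding hamiltonian_def by measurable

lemma borel_measurable_gibbs[measurable]: "gibbs \<in> borel_measurable borel"
  unfolding gibbs_def by measurable

lemma gibbs_nonneg: "0 \<le> gibbs x"
  by (simp add: gibbs_def)

lemma hamiltonian_flip[simp]: "hamiltonian (flip x) = hamiltonian x"
  by (simp add: hamiltonian_def kinetic_def flip_def)

lemma gibbs_flip[simp]: "gibbs (flip x) = gibbs x"
  by (simp add: gibbs_def)

lemma accept_prob_nonneg: "0 \<le> accept_prob x y W"
  and accept_prob_le_1: "accept_prob x y W \<le> 1"
  by (simp_all add: accept_prob_def indicator_def)

lemma gibbs_accept_prob_reverse:
  "gibbs y * accept_prob (flip y) (flip z) (- W) * exp W = gibbs z * accept_prob z y W"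
  using metropolis_skew_identity[of "hamiltonian y" W "hamiltonian z"]
  by (simp add: gibbs_def accept_prob_def mult_ac)

lemma amag_noise_eq: "amag_noise eps sig beta Q T = trajectory_noise T \<Otimes>\<^sub>M uniform_measure lborel {0..1}"
  unfolding amag_noise_def step_noise_def ..

lemma prob_space_transition_noise: "prob_space (trajectory_noise T \<Otimes>\<^sub>M uniform_measure lborel {0..1::real})"
  using prob_space_trajectory_noise by (intro prob_space_pair prob_space_uniform_measure) auto

lemma amag_step_eq:
  "amag_step Theta U eps sig beta gU T x (w, v) =
    (if fst (proposal x w) \<in> Theta
        \<and> v < min 1 (exp (hamiltonian x - hamiltonian (proposal x w) + proposal_work x w))
     then proposal x w else flip x)"
proof -
  obtain th r where x: "x = (th, r)"
    by fastforce
  show ?thesis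
    using amag_prop_eq_iterate[OF T_ge_1, of x w]
    by (simp add: x amag_step_def Let_def flip_def hamiltonian_def algebra_simps)
qed

lemma measurable_amag_step[measurable]:
  "(\<lambda>(x, \<omega>). amag_step Theta U eps sig beta gU T x \<omega>)
    \<in> borel \<Otimes>\<^sub>M (trajectory_noise T \<Otimes>\<^sub>M uniform_measure lborel {0..1}) \<rightarrow>\<^sub>M borel"
proof -
  have "(\<lambda>(x, \<omega>). amag_step Theta U eps sig beta gU T x \<omega>) = (\<lambda>(x, w, v).
      if fst (proposal x w) \<in> Theta \<and> v < min 1 (exp (hamiltonian x - hamiltonian (proposal x w) + proposal_work x w))
      then proposal x w else flip x)"
    by (auto simp: fun_eq_iff amag_step_eq)
  then show ?thesis
    by simp
qed

lemma measurable_amag_step_state: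
  "amag_step Theta U eps sig beta gU T x \<in> trajectory_noise T \<Otimes>\<^sub>M uniform_measure lborel {0..1} \<rightarrow>\<^sub>M borel"
  using measurable_Pair_compose_split[OF measurable_amag_step, of "\<lambda>_. x" _ "\<lambda>\<omega>. \<omega>"] by simp

lemma emeasure_kernel_eq_nn_integral:
  assumes "C \<in> sets borel"
  shows "emeasure (kernel x) C = (\<integral>\<^sup>+\<omega>. indicator C (amag_step Theta U eps sig beta gU T x \<omega>)
      \<partial>(trajectory_noise T \<Otimes>\<^sub>M uniform_measure lborel {0..1}))"
proof -
  have "emeasure (kernel x) C = (\<integral>\<^sup>+y. indicator C y \<partial>kernel x)"
    using assms by (simp add: amag_kernel_def)
  also have "\<dots> = (\<integral>\<^sup>+\<omega>. indicator C (amag_step Theta U eps sig beta gU T x \<omega>)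
      \<partial>(trajectory_noise T \<Otimes>\<^sub>M uniform_measure lborel {0..1}))"
    unfolding amag_kernel_def amag_noise_eq
    using assms by (intro nn_integral_distr[OF measurable_amag_step_state]) simp
  finally show ?thesis .
qed

definition acceptance :: "'d state \<Rightarrow> (nat \<Rightarrow> (real^'d) \<times> 'u) \<Rightarrow> real" where
  "acceptance x w = accept_prob x (proposal x w) (proposal_work x w)"

lemma borel_measurable_acceptance[measurable]:
  "(\<lambda>(x, w). acceptance x w) \<in> borel_measurable (borel \<Otimes>\<^sub>M trajectory_noise T)"
  unfolding acceptance_def accept_prob_def by measurable

lemma acceptance_nonneg: "0 \<le> acceptance x w"
  and acceptance_le_1: "acceptance x w \<le> 1"
  by (simp_all add: acceptance_def accept_prob_nonneg accept_prob_le_1)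

lemma nn_integral_amag_step_uniform:
  "(\<integral>\<^sup>+v. indicator B (amag_step Theta U eps sig beta gU T x (w, v)) \<partial>uniform_measure lborel {0..1})
    = ennreal (indicator B (proposal x w) * acceptance x w + indicator B (flip x) * (1 - acceptance x w))"
proof -
  have "acceptance x w = (if fst (proposal x w) \<in> Theta
      then min 1 (exp (hamiltonian x - hamiltonian (proposal x w) + proposal_work x w)) else 0)"
    by (simp add: acceptance_def accept_prob_def)
  then have "(\<integral>\<^sup>+v. indicator B (amag_step Theta U eps sig beta gU T x (w, v)) \<partial>uniform_measure lborel {0..1})
      = indicator B (proposal x w) * ennreal (acceptance x w) + indicator B (flip x) * ennreal (1 - acceptance x w)"
    unfolding amag_step_eq by (simp only:) (rule nn_integral_uniform_threshold, simp_all)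
  also have "\<dots> = ennreal (indicator B (proposal x w) * acceptance x w + indicator B (flip x) * (1 - acceptance x w))"
    using acceptance_nonneg[of x w] acceptance_le_1[of x w]
    by (auto simp: indicator_def ennreal_plus[symmetric] simp del: ennreal_plus)
  finally show ?thesis .
qed

lemma emeasure_kernel:
  assumes "B \<in> sets borel"
  shows "emeasure (kernel x) B = (\<integral>\<^sup>+w. ennreal (indicator B (proposal x w) * acceptance x w
      + indicator B (flip x) * (1 - acceptance x w)) \<partial>trajectory_noise T)"
proof -
  interpret uniform: prob_space "uniform_measure lborel {0..1::real}"
    by (rule prob_space_uniform_measure) auto
  show ?thesis
    unfolding emeasure_kernel_eq_nn_integral[OF assms]
    using measurable_amag_step_state assms
    by (subst uniform.nn_integral_fst[symmetric]) (simp_all add: nn_integral_amag_step_uniform)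
qed

lemma prob_space_kernel: "prob_space (kernel x)"
proof -
  interpret prob_space "trajectory_noise T \<Otimes>\<^sub>M uniform_measure lborel {0..1::real}"
    by (rule prob_space_transition_noise)
  show ?thesis
    unfolding amag_kernel_def amag_noise_eq by (rule prob_space_distr[OF measurable_amag_step_state])
qed

lemma borel_measurable_emeasure_kernel[measurable]:
  assumes [measurable]: "B \<in> sets borel"
  shows "(\<lambda>x. emeasure (kernel x) B) \<in> borel_measurable borel"
proof -
  interpret prob_space "trajectory_noise T"
    by (rule prob_space_trajectory_noise)
  have "(\<lambda>(x, w). ennreal (indicator B (proposal x w) * acceptance x w + indicator B (flip x) * (1 - acceptance x w)))
      \<in> borel_measurable (borel \<Otimes>\<^sub>M trajectory_noise T)"
    by measurable
  from borel_measurable_nn_integral_fst[OF this]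
  have "(\<lambda>x. \<integral>\<^sup>+w. ennreal (indicator B (proposal x w) * acceptance x w + indicator B (flip x) * (1 - acceptance x w))
      \<partial>trajectory_noise T) \<in> borel_measurable borel"
    by (simp only: case_prod_conv)
  then show ?thesis
    by (simp only: emeasure_kernel[OF assms])
qed

lemma ennreal_mult_add:
  "0 \<le> a \<Longrightarrow> 0 \<le> b \<Longrightarrow> 0 \<le> c \<Longrightarrow> ennreal a * ennreal (b + c) = ennreal (a * b) + ennreal (a * c)"
  by (simp add: ennreal_mult'[symmetric] distrib_left)

lemma nn_integral_kernel_split:
  assumes "c \<ge> 0" and [measurable]: "A \<in> sets borel" "B \<in> sets borel"
  shows "(\<integral>\<^sup>+x. ennreal (indicator A x * (c * gibbs x)) * emeasure (kernel x) B \<partial>lborel)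
    = (\<integral>\<^sup>+x. \<integral>\<^sup>+w. ennreal (indicator A x * (c * gibbs x) * indicator B (proposal x w) * acceptance x w)
        \<partial>trajectory_noise T \<partial>lborel)
    + (\<integral>\<^sup>+x. \<integral>\<^sup>+w. ennreal (indicator A x * (c * gibbs x) * indicator B (flip x) * (1 - acceptance x w))
        \<partial>trajectory_noise T \<partial>lborel)"
proof -
  interpret prob_space "trajectory_noise T"
    by (rule prob_space_trajectory_noise)
  have weight: "0 \<le> indicator A x * (c * gibbs x)" for x
    using \<open>c \<ge> 0\<close> gibbs_nonneg[of x] by simp
  have [measurable]:
    "(\<lambda>(x, w). ennreal (indicator A x * (c * gibbs x) * indicator B (proposal x w) * acceptance x w))
      \<in> borel_measurable (borel \<Otimes>\<^sub>M trajectory_noise T)"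
    by measurable
  have [measurable]:
    "(\<lambda>(x, w). ennreal (indicator A x * (c * gibbs x) * indicator B (flip x) * (1 - acceptance x w)))
      \<in> borel_measurable (borel \<Otimes>\<^sub>M trajectory_noise T)"
    by measurable
  have "ennreal (indicator A x * (c * gibbs x)) * emeasure (kernel x) B
      = (\<integral>\<^sup>+w. ennreal (indicator A x * (c * gibbs x) * indicator B (proposal x w) * acceptance x w)
        + ennreal (indicator A x * (c * gibbs x) * indicator B (flip x) * (1 - acceptance x w)) \<partial>trajectory_noise T)"
    for x
  proof -
    have "(\<lambda>w. ennreal (indicator B (proposal x w) * acceptance x w + indicator B (flip x) * (1 - acceptance x w)))
        \<in> borel_measurable (trajectory_noise T)"
      by measurable
    then show ?thesis
      using weight[of x] acceptance_nonneg[of x] acceptance_le_1[of x]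
      unfolding emeasure_kernel[OF assms(3)]
      by (simp add: nn_integral_cmult[symmetric] ennreal_mult_add mult.assoc del: ennreal_plus)
  qed
  then show ?thesis
    by (simp add: nn_integral_add)
qed

lemma nn_integral_accepted_flip:
  assumes "c \<ge> 0" and [measurable]: "A \<in> sets borel" "B \<in> sets borel"
  shows "(\<integral>\<^sup>+x. \<integral>\<^sup>+w. ennreal (indicator A x * (c * gibbs x) * indicator B (proposal x w) * acceptance x w)
        \<partial>trajectory_noise T \<partial>lborel)
    = (\<integral>\<^sup>+x. \<integral>\<^sup>+w. ennreal (indicator (flip ` B) x * (c * gibbs x) * indicator (flip ` A) (proposal x w)
        * acceptance x w) \<partial>trajectory_noise T \<partial>lborel)"
proof -
  define F where "F t = ennreal (indicator A (fst t) * (c * gibbs (fst t)) * indicator B (fst (snd t))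
      * accept_prob (fst t) (fst (snd t)) (snd (snd t)))" for t :: "'d state \<times> 'd state \<times> real"
  have [measurable]: "F \<in> borel_measurable borel"
    unfolding F_def accept_prob_def by measurable
  have "F (flip y, flip z, - W) * ennreal (exp W)
      = ennreal (indicator (flip ` B) z * (c * gibbs z) * indicator (flip ` A) y * accept_prob z y W)" for y z W
  proof -
    have "F (flip y, flip z, - W) * ennreal (exp W)
        = ennreal (indicator (flip ` A) y * indicator (flip ` B) z * c
            * (gibbs y * accept_prob (flip y) (flip z) (- W) * exp W))"
      using \<open>c \<ge> 0\<close> gibbs_nonneg accept_prob_nonneg
      by (simp add: F_def indicator_flip_image ennreal_mult'[symmetric] mult_ac)
    also have "\<dots> = ennreal (indicator (flip ` A) y * indicator (flip ` B) z * c * (gibbs z * accept_prob z y W))"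
      by (simp only: gibbs_accept_prob_reverse)
    finally show ?thesis
      by (simp add: mult_ac)
  qed
  then show ?thesis
    using skew_balancedD[OF skew_balanced_trajectory, of F] by (simp add: F_def acceptance_def)
qed

theorem skew_detailed_balance:
  assumes "c \<ge> 0" and [measurable]: "A \<in> sets borel" "B \<in> sets borel"
  shows "(\<integral>\<^sup>+x. ennreal (indicator A x * (c * gibbs x)) * emeasure (kernel x) B \<partial>lborel)
    = (\<integral>\<^sup>+x. ennreal (indicator (flip ` B) x * (c * gibbs x)) * emeasure (kernel x) (flip ` A) \<partial>lborel)"
  unfolding nn_integral_kernel_split[OF assms] nn_integral_kernel_split[OF \<open>c \<ge> 0\<close> sets_flip_image sets_flip_image, OF assms(3,2)]
  using nn_integral_accepted_flip[OF assms] by (simp add: indicator_flip_image mult_ac)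

end

section \<open>Normalisation and the reversibility statements\<close>

locale amagold_target = amagold_chain eps sig beta Q gU Theta U T
  for eps sig beta :: real and Q :: "'u measure" and gU :: "'u \<Rightarrow> real^'d::finite \<Rightarrow> real^'d"
    and Theta U T +
  assumes integrable_boltzmann: "integrable lborel (\<lambda>t. indicator Theta t * exp (- U t))"
    and boltzmann_pos: "(\<integral>t. indicator Theta t * exp (- U t) \<partial>lborel) > 0"
begin

definition Z :: real where
  "Z = (\<integral>t. indicator Theta t * exp (- U t) \<partial>lborel)"

definition gauss_const :: real where
  "gauss_const = (1 / sqrt (2 * pi * sig\<^sup>2)) ^ CARD('d)"

abbreviation resample_kernel :: "real^'d \<Rightarrow> (real^'d) measure" where
  "resample_kernel \<equiv> amag_kernel_resample Theta U eps sig beta gU Q T"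

lemma Z_pos: "Z > 0"
  using boltzmann_pos by (simp add: Z_def)

lemma gauss_const_pos: "gauss_const > 0"
  using sig_pos by (simp add: gauss_const_def)

lemma gibbs_Pair: "gibbs (t, r) = indicator Theta t * exp (- U t) / gauss_const * gauss_dens sig r"
proof -
  have "exp (- kinetic sig r) = gauss_dens sig r / gauss_const"
    using gauss_const_pos sig_pos by (simp add: gauss_dens_eq gauss_const_def kinetic_def)
  moreover have "exp (- hamiltonian (t, r)) = exp (- U t) * exp (- kinetic sig r)"
    by (simp add: hamiltonian_def exp_add[symmetric])
  ultimately show ?thesis
    by (simp add: gibbs_def)
qed

lemma nn_integral_gibbs: "(\<integral>\<^sup>+x. ennreal (gibbs x) \<partial>lborel) = ennreal (Z / gauss_const)"
proof -
  have "(\<integral>\<^sup>+x. ennreal (gibbs x) \<partial>lborel)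
      = (\<integral>\<^sup>+t. \<integral>\<^sup>+(r :: real^'d). ennreal (indicator Theta t * exp (- U t) / gauss_const * gauss_dens sig r)
          \<partial>lborel \<partial>lborel)"
    by (subst nn_integral_lborel_pair) (simp_all add: gibbs_Pair)
  also have "\<dots> = (\<integral>\<^sup>+t. ennreal (1 / gauss_const) * ennreal (indicator Theta t * exp (- U t)) \<partial>lborel)"
  proof (intro nn_integral_cong)
    fix t :: "real^'d"
    have "0 \<le> indicator Theta t * exp (- U t) / gauss_const"
      using gauss_const_pos by simp
    then have "(\<integral>\<^sup>+(r :: real^'d). ennreal (indicator Theta t * exp (- U t) / gauss_const * gauss_dens sig r) \<partial>lborel)
      = (\<integral>\<^sup>+(r :: real^'d). ennreal (indicator Theta t * exp (- U t) / gauss_const) * ennreal (gauss_dens sig r) \<partial>lborel)"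
      by (simp only: ennreal_mult')
    also have "\<dots> = ennreal (indicator Theta t * exp (- U t) / gauss_const)"
      by (simp add: nn_integral_cmult nn_integral_gauss_dens[OF sig_pos])
    also have "\<dots> = ennreal (1 / gauss_const) * ennreal (indicator Theta t * exp (- U t))"
      by (simp add: ennreal_mult''[symmetric])
    finally show "(\<integral>\<^sup>+(r :: real^'d). ennreal (indicator Theta t * exp (- U t) / gauss_const * gauss_dens sig r) \<partial>lborel)
      = ennreal (1 / gauss_const) * ennreal (indicator Theta t * exp (- U t))" .
  qed
  also have "\<dots> = ennreal (1 / gauss_const) * ennreal Z"
    unfolding Z_def using integrable_boltzmann
    by (simp add: nn_integral_cmult nn_integral_eq_integral)
  also have "\<dots> = ennreal (Z / gauss_const)"
    using gauss_const_pos by (simp add: ennreal_mult'[symmetric])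
  finally show ?thesis .
qed

lemma pi_state_eq_gibbs: "pi_state Theta U sig x = gauss_const / Z * gibbs x"
proof -
  have "(\<integral>y. gibbs y \<partial>lborel) = Z / gauss_const"
    using nn_integral_gibbs Z_pos gauss_const_pos gibbs_nonneg
    by (simp add: integral_eq_nn_integral)
  moreover have "- U (fst y) - (norm (snd y))\<^sup>2 / (2 * sig\<^sup>2) = - hamiltonian y" for y :: "'d state"
    by (simp add: hamiltonian_def kinetic_def)
  ultimately show ?thesis
    by (simp add: pi_state_def gibbs_def[symmetric])
qed

lemma pi_state_Pair: "pi_state Theta U sig (t, r) = pi_theta Theta U t * gauss_dens sig r"
  using gauss_const_pos Z_pos by (simp add: pi_state_eq_gibbs gibbs_Pair pi_theta_def Z_def[symmetric])

lemma pi_theta_nonneg: "0 \<le> pi_theta Theta U t"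
  using Z_pos by (simp add: pi_theta_def Z_def[symmetric])

lemma ennreal_indicator_pi_state:
  "indicator A x * ennreal (pi_state Theta U sig x) = ennreal (indicator A x * (gauss_const / Z * gibbs x))"
  by (simp add: pi_state_eq_gibbs indicator_def)

lemma pi_state_flip: "pi_state Theta U sig (flip x) = pi_state Theta U sig x"
  by (simp add: pi_state_eq_gibbs)

lemma borel_measurable_pi_state[measurable]: "pi_state Theta U sig \<in> borel_measurable borel"
  unfolding pi_state_eq_gibbs[abs_def] by measurable

lemma emeasure_kernel_UNIV: "emeasure (kernel x) UNIV = 1"
proof -
  have "space (kernel x) = UNIV"
    by (simp add: amag_kernel_def)
  then show ?thesis
    using prob_space.emeasure_space_1[OF prob_space_kernel, of x] by simp
qed

theorem skew_reversible:
  assumes "A \<in> sets borel" "B \<in> sets borel"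
  shows "(\<integral>\<^sup>+x. indicator A x * ennreal (pi_state Theta U sig x) * emeasure (kernel x) B \<partial>lborel)
    = (\<integral>\<^sup>+x. indicator (flip ` B) x * ennreal (pi_state Theta U sig x) * emeasure (kernel x) (flip ` A) \<partial>lborel)"
  using skew_detailed_balance[of "gauss_const / Z" A B] assms gauss_const_pos Z_pos
  by (simp add: ennreal_indicator_pi_state)

theorem stationary:
  assumes [measurable]: "B \<in> sets borel"
  shows "(\<integral>\<^sup>+x. ennreal (pi_state Theta U sig x) * emeasure (kernel x) B \<partial>lborel)
    = (\<integral>\<^sup>+x. indicator B x * ennreal (pi_state Theta U sig x) \<partial>lborel)"
proof -
  have "(\<integral>\<^sup>+x. ennreal (pi_state Theta U sig x) * emeasure (kernel x) B \<partial>lborel)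
      = (\<integral>\<^sup>+x. indicator (flip ` B) x * ennreal (pi_state Theta U sig x) * emeasure (kernel x) (flip ` UNIV) \<partial>lborel)"
    using skew_reversible[of UNIV B] by simp
  also have "\<dots> = (\<integral>\<^sup>+x. indicator B (flip x) * ennreal (pi_state Theta U sig (flip x)) \<partial>lborel)"
    by (simp add: flip_UNIV emeasure_kernel_UNIV indicator_flip_image pi_state_flip)
  also have "\<dots> = (\<integral>\<^sup>+x. indicator B x * ennreal (pi_state Theta U sig x) \<partial>lborel)"
    by (rule nn_integral_lborel_flip[symmetric]) measurable
  finally show ?thesis .
qed

lemma nn_integral_pi_state_marginal:
  assumes [measurable]: "A \<in> sets borel"
  shows "(\<integral>\<^sup>+x. indicator (A \<times> UNIV) x * ennreal (pi_state Theta U sig x) \<partial>lborel)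
    = (\<integral>\<^sup>+t. indicator A t * ennreal (pi_theta Theta U t) \<partial>lborel)"
proof -
  have "(\<integral>\<^sup>+x. indicator (A \<times> UNIV) x * ennreal (pi_state Theta U sig x) \<partial>lborel)
      = (\<integral>\<^sup>+t. \<integral>\<^sup>+(r :: real^'d). (indicator A t * ennreal (pi_theta Theta U t)) * ennreal (gauss_dens sig r)
          \<partial>lborel \<partial>lborel)"
    by (subst nn_integral_lborel_pair)
      (auto simp: pi_state_Pair ennreal_mult pi_theta_nonneg gauss_dens_nonneg indicator_times mult_ac)
  also have "\<dots> = (\<integral>\<^sup>+t. indicator A t * ennreal (pi_theta Theta U t) \<partial>lborel)"
    by (simp add: nn_integral_cmult nn_integral_gauss_dens[OF sig_pos])
  finally show ?thesis .
qed

lemma emeasure_resample_kernel: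
  assumes [measurable]: "B \<in> sets borel"
  shows "emeasure (resample_kernel \<theta>) B = (\<integral>\<^sup>+r. emeasure (kernel (\<theta>, r)) (B \<times> UNIV) \<partial>gauss_vec sig)"
proof -
  interpret noise: prob_space "trajectory_noise T \<Otimes>\<^sub>M uniform_measure lborel {0..1::real}"
    by (rule prob_space_transition_noise)
  have "(\<lambda>t. (\<theta>, fst t)) \<in> gauss_vec sig \<Otimes>\<^sub>M (trajectory_noise T \<Otimes>\<^sub>M uniform_measure lborel {0..1}) \<rightarrow>\<^sub>M borel"
    unfolding borel_prod[symmetric] by measurable
  from measurable_Pair_compose_split[OF measurable_amag_step this measurable_snd]
  have step: "(\<lambda>(r, \<omega>). fst (amag_step Theta U eps sig beta gU T (\<theta>, r) \<omega>))
      \<in> gauss_vec sig \<Otimes>\<^sub>M (trajectory_noise T \<Otimes>\<^sub>M uniform_measure lborel {0..1}) \<rightarrow>\<^sub>M borel"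
    by (simp add: split_beta')
  have "emeasure (resample_kernel \<theta>) B = (\<integral>\<^sup>+y. indicator B y \<partial>resample_kernel \<theta>)"
    by (simp add: amag_kernel_resample_def)
  also have "\<dots> = (\<integral>\<^sup>+t. indicator B (fst (amag_step Theta U eps sig beta gU T (\<theta>, fst t) (snd t)))
      \<partial>(gauss_vec sig \<Otimes>\<^sub>M (trajectory_noise T \<Otimes>\<^sub>M uniform_measure lborel {0..1})))"
    unfolding amag_kernel_resample_def amag_noise_eq
    by (subst nn_integral_distr[OF step]) (simp_all add: split_beta')
  also have "\<dots> = (\<integral>\<^sup>+r. \<integral>\<^sup>+\<omega>. indicator (B \<times> UNIV) (amag_step Theta U eps sig beta gU T (\<theta>, r) \<omega>)
      \<partial>(trajectory_noise T \<Otimes>\<^sub>M uniform_measure lborel {0..1}) \<partial>gauss_vec sig)"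
    using step by (subst noise.nn_integral_fst[symmetric]) (simp_all add: split_beta' indicator_times)
  also have "\<dots> = (\<integral>\<^sup>+r. emeasure (kernel (\<theta>, r)) (B \<times> UNIV) \<partial>gauss_vec sig)"
    by (simp add: emeasure_kernel_eq_nn_integral)
  finally show ?thesis .
qed

lemma nn_integral_resample_kernel:
  assumes [measurable]: "A \<in> sets borel" "B \<in> sets borel"
  shows "(\<integral>\<^sup>+\<theta>. indicator A \<theta> * ennreal (pi_theta Theta U \<theta>) * emeasure (resample_kernel \<theta>) B \<partial>lborel)
    = (\<integral>\<^sup>+x. indicator (A \<times> UNIV) x * ennreal (pi_state Theta U sig x) * emeasure (kernel x) (B \<times> UNIV) \<partial>lborel)"
proof -
  have "indicator A \<theta> * ennreal (pi_theta Theta U \<theta>) * emeasure (resample_kernel \<theta>) B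
      = (\<integral>\<^sup>+(r :: real^'d). indicator (A \<times> UNIV) (\<theta>, r) * ennreal (pi_state Theta U sig (\<theta>, r))
          * emeasure (kernel (\<theta>, r)) (B \<times> UNIV) \<partial>lborel)" for \<theta>
  proof -
    have "(\<lambda>r. (\<theta>, r)) \<in> borel_measurable (borel :: (real^'d) measure)"
      unfolding borel_prod[symmetric] by measurable
    then have [measurable]: "(\<lambda>r. emeasure (kernel (\<theta>, r)) (B \<times> UNIV)) \<in> borel_measurable borel"
      by (rule measurable_compose) measurable
    have resample: "emeasure (resample_kernel \<theta>) B
        = (\<integral>\<^sup>+r. ennreal (gauss_dens sig r) * emeasure (kernel (\<theta>, r)) (B \<times> UNIV) \<partial>lborel)"
      unfolding emeasure_resample_kernel[OF assms(2)] gauss_vec_eq_density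
      by (rule nn_integral_density) measurable
    show ?thesis
      unfolding resample by (subst nn_integral_cmult[symmetric])
        (auto intro!: nn_integral_cong simp: pi_state_Pair ennreal_mult pi_theta_nonneg gauss_dens_nonneg
          indicator_times mult_ac)
  qed
  then show ?thesis
    by (simp add: nn_integral_lborel_pair[of "\<lambda>x. indicator (A \<times> UNIV) x * ennreal (pi_state Theta U sig x)
      * emeasure (kernel x) (B \<times> UNIV)"])
qed

theorem reversible_resample:
  assumes "A \<in> sets borel" "B \<in> sets borel"
  shows "(\<integral>\<^sup>+\<theta>. indicator A \<theta> * ennreal (pi_theta Theta U \<theta>) * emeasure (resample_kernel \<theta>) B \<partial>lborel)
    = (\<integral>\<^sup>+\<theta>. indicator B \<theta> * ennreal (pi_theta Theta U \<theta>) * emeasure (resample_kernel \<theta>) A \<partial>lborel)"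
  using skew_reversible[of "A \<times> UNIV" "B \<times> UNIV"] assms
  by (simp add: nn_integral_resample_kernel flip_image_Times_UNIV)

lemma emeasure_resample_kernel_UNIV: "emeasure (resample_kernel \<theta>) UNIV = 1"
  using prob_space.emeasure_space_1[OF prob_space_gauss_vec[OF sig_pos]]
  by (simp add: emeasure_resample_kernel emeasure_kernel_UNIV sets_gauss_vec)

theorem stationary_resample:
  assumes "B \<in> sets borel"
  shows "(\<integral>\<^sup>+\<theta>. ennreal (pi_theta Theta U \<theta>) * emeasure (resample_kernel \<theta>) B \<partial>lborel)
    = (\<integral>\<^sup>+\<theta>. indicator B \<theta> * ennreal (pi_theta Theta U \<theta>) \<partial>lborel)"
  using reversible_resample[of UNIV B] assms by (simp add: emeasure_resample_kernel_UNIV)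

end

theorem theorem1:
  fixes Theta :: "(real^'d) set" and U :: "(real^'d) \<Rightarrow> real"
    and eps sig beta :: real and T :: nat
    and Q :: "'u measure" and Ut :: "'u \<Rightarrow> (real^'d) \<Rightarrow> real" and gU :: "'u \<Rightarrow> (real^'d) \<Rightarrow> (real^'d)"
  assumes Theta_meas: "Theta \<in> sets borel"
    and U_diff: "\<And>x. U differentiable (at x)"
    and eps_pos: "eps > 0" and sigma_pos: "sig > 0" and beta_pos: "beta > 0"
    and T_ge: "T \<ge> 1"
    and Q_prob: "prob_space Q"
    and Ut_grad: "\<And>u x. GDERIV (Ut u) x :> gU u x"
    and gU_meas: "(\<lambda>(u, x). gU u x) \<in> measurable (Q \<Otimes>\<^sub>M borel) borel"
    and Z_int: "integrable lborel (\<lambda>t. indicator Theta t * exp (- U t))"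
    and Z_pos: "(\<integral>t. indicator Theta t * exp (- U t) \<partial>lborel) > 0"
  shows
    \<comment> \<open>With momentum resampling: chain on theta is reversible w.r.t. pi(theta), which is stationary.\<close>
    "(\<forall>A B. A \<in> sets borel \<longrightarrow> B \<in> sets borel \<longrightarrow> A \<subseteq> Theta \<longrightarrow> B \<subseteq> Theta \<longrightarrow>
        (\<integral>\<^sup>+ th. indicator A th * ennreal (pi_theta Theta U th) *
            emeasure (amag_kernel_resample Theta U eps sig beta gU Q T th) B \<partial>lborel)
      = (\<integral>\<^sup>+ th. indicator B th * ennreal (pi_theta Theta U th) *
            emeasure (amag_kernel_resample Theta U eps sig beta gU Q T th) A \<partial>lborel))
   \<and> (\<forall>B. B \<in> sets borel \<longrightarrow>
        (\<integral>\<^sup>+ th. ennreal (pi_theta Theta U th) *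
            emeasure (amag_kernel_resample Theta U eps sig beta gU Q T th) B \<partial>lborel)
      = (\<integral>\<^sup>+ th. indicator B th * ennreal (pi_theta Theta U th) \<partial>lborel))
    \<comment> \<open>Without resampling: chain on (theta, r) is skew-reversible w.r.t. flip and pi(theta, r),
        pi(theta, r) is stationary, and its theta-marginal is pi(theta).\<close>
   \<and> (\<forall>x. pi_state Theta U sig x = pi_state Theta U sig (flip x))
   \<and> (\<forall>A B. A \<in> sets borel \<longrightarrow> B \<in> sets borel \<longrightarrow> A \<subseteq> Theta \<times> UNIV \<longrightarrow> B \<subseteq> Theta \<times> UNIV \<longrightarrow>
        (\<integral>\<^sup>+ x. indicator A x * ennreal (pi_state Theta U sig x) *
            emeasure (amag_kernel Theta U eps sig beta gU Q T x) B \<partial>lborel)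
      = (\<integral>\<^sup>+ x. indicator (flip ` B) x * ennreal (pi_state Theta U sig x) *
            emeasure (amag_kernel Theta U eps sig beta gU Q T x) (flip ` A) \<partial>lborel))
   \<and> (\<forall>B. B \<in> sets borel \<longrightarrow>
        (\<integral>\<^sup>+ x. ennreal (pi_state Theta U sig x) *
            emeasure (amag_kernel Theta U eps sig beta gU Q T x) B \<partial>lborel)
      = (\<integral>\<^sup>+ x. indicator B x * ennreal (pi_state Theta U sig x) \<partial>lborel))
   \<and> (\<forall>A. A \<in> sets borel \<longrightarrow>
        (\<integral>\<^sup>+ x. indicator (A \<times> UNIV) x * ennreal (pi_state Theta U sig x) \<partial>lborel)
      = (\<integral>\<^sup>+ th. indicator A th * ennreal (pi_theta Theta U th) \<partial>lborel))"
proof -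
  have "U \<in> borel_measurable borel"
    using U_diff by (intro borel_measurable_continuous_onI differentiable_imp_continuous_on)
      (simp add: differentiable_at_imp_differentiable_on)
  then interpret amagold_target eps sig beta Q gU Theta U T
    using eps_pos sigma_pos beta_pos Q_prob gU_meas Theta_meas T_ge Z_int Z_pos
    by (simp add: amagold_target_def amagold_target_axioms_def amagold_chain_def amagold_chain_axioms_def
      amagold_def)
  show ?thesis
    by (intro conjI allI impI)
      (rule reversible_resample stationary_resample pi_state_flip[symmetric] skew_reversible stationary
        nn_integral_pi_state_marginal; assumption)+
qed

end
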